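(* Let $d=1$, let the sampling be high frequency, and assume $A_0'$ and $A_1'$. Take $h_n=c\,n^{-1/5}$ with $0<c<\infty$. - If $\gamma_0<1$ and $\delta_n=d_1h_n$ with $0<d_1<\infty$, then $\mathrm{MISE}(\hat f_n^{FP})=O(T_n^{-1})$. - If $\gamma_0=1$ and $\delta_n=d_2h_n\ln(h_n^{-1})$ with $0<d_2<\infty$, then $\mathrm{MISE}(\hat f_n^{FP})=O(T_n^{-1}\ln T_n)$. Here $T_n=n\delta_n$.
   Context: Let $\{X_t,t\in\mathbb R\}$ be a measurable real-valued process. Every $X_t$ has Lebesgue density $f$. For $s\ne t$ the pair $(X_s,X_t)$ has a joint density $f_{(X_s,X_t)}=f_{(X_0,X_{|t-s|})}=:f_{|t-s|}$. For $u>0$ put $g_u(y,z)=f_u(y,z)-f(y)f(z)$. High frequency sampling: $t_k=k\delta_n$, with $\delta_n\to0$ and $T_n=n\delta_n\to\infty$. Frequency polygon. Bins are $[b_j,b_{j+1})$ of width $h_n$ with midpoints $c_j$. Set $\hat f_j=\frac1{nh_n}\sum_k\mathbf 1_{[b_j,b_{j+1})}(X_{t_k})$ and $\hat f_n^{FP}(x)=\frac{x-c_j}{h_n}\hat f_{j+1}+\frac{c_{j+1}-x}{h_n}\hat f_j$ for $x\in[c_j,c_{j+1})$. $\mathrm{MISE}(\hat f)=\mathrm E\int(\hat f-f)^2$. Assumptions. - $A_0'$: (i) $f\in\mathcal C^2(\mathbb R)$, $f''\in L_1$, $f,f''\in L_2$; (ii) $|f''(x)-f''(y)|\le l_0|x-y|^\nu$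 with $l_0>0$ and $\nu\in(0,1]$; (iii) $f$ continuous and bounded. - $A_1'(i)$: there exist $\gamma_0>0$, $u_0>0$ and a positive, continuous, integrable $\varphi$ with $\sup_zf_u(y,z)\le\varphi(y)u^{-\gamma_0}$ for $0<u\le u_0$. - $A_1'(ii)$: there exist a positive, continuous, integrable $k$ and a bounded, ultimately decreasing $\pi$ with $\int_{u_1}^\infty\pi<\infty$ for some $u_1>u_0$, such that $\sup_z|g_u(y,z)|\le k(y)\pi(u)$ for $u\ge u_0$. *)

theory Defs
  imports "HOL-Probability.Probability"
begin

text \<open>Bins are the grid intervals [x0 + j h, x0 + (j+1) h), j an integer,
  with midpoints x0 + (j + 1/2) h.  Sampling times are t_k = k delta, k = 1..n.\<close>

definition fp_bin :: "(real \<Rightarrow> 'w \<Rightarrow> real) \<Rightarrow> real \<Rightarrow> real \<Rightarrow> real \<Rightarrow> nat \<Rightarrow> int \<Rightarrow> 'w \<Rightarrow> real" where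
  "fp_bin X delta h x0 n j \<omega> =
     (1 / (real n * h)) *
     (\<Sum>k\<in>{1..n}. indicator {x0 + real_of_int j * h ..< x0 + (real_of_int j + 1) * h}
                          (X (real k * delta) \<omega>))"

definition fp_est :: "(real \<Rightarrow> 'w \<Rightarrow> real) \<Rightarrow> real \<Rightarrow> real \<Rightarrow> real \<Rightarrow> nat \<Rightarrow> 'w \<Rightarrow> real \<Rightarrow> real" where
  "fp_est X delta h x0 n \<omega> x =
     (let j = \<lfloor>(x - x0 - h / 2) / h\<rfloor>;
          cj = x0 + (real_of_int j + 1 / 2) * h;
          cj1 = x0 + (real_of_int j + 1 + 1 / 2) * h
      in ((x - cj) / h) * fp_bin X delta h x0 n (j + 1) \<omega>
         + ((cj1 - x) / h) * fp_bin X delta h x0 n j \<omega>)"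

definition mise_fp :: "'w measure \<Rightarrow> (real \<Rightarrow> 'w \<Rightarrow> real) \<Rightarrow> (real \<Rightarrow> real)
                        \<Rightarrow> real \<Rightarrow> real \<Rightarrow> real \<Rightarrow> nat \<Rightarrow> ennreal" where
  "mise_fp M X f delta h x0 n =
     (\<integral>\<^sup>+ \<omega>. (\<integral>\<^sup>+ x. ennreal ((fp_est X delta h x0 n \<omega> x - f x)\<^sup>2) \<partial>lborel) \<partial>M)"

end

theory Submission
  imports Defs "HOL-Real_Asymp.Real_Asymp"
begin

(*
  For x between the midpoints of bins j and j+1 the estimator is a convex combination of the
  two bin heights.  Hence its squared error is at most 2 (D_{j+1} + D_j) + 2 b(x)^2, where D_j
  is the squared deviation of bin height j from its mean and b is the bias of the polygon
  through the bin means.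
  (1) Bias: a first-order Taylor expansion of f and Cauchy-Schwarz give
      b(x)^2 <= 16 h^3 int_{x-2h}^{x+2h} f''^2, so the integrated squared bias is O(h^4).
  (2) Stochastic part: E D_j is a double sum of covariances of bin indicators at lags m delta.
      Lags <= u0 are controlled by A1'(i), larger lags by A1'(ii); summing over all bins gives
      a bound 4/(n h) + 8 (int phi * S_near + int k * S_far) / n in terms of two lag sums.
  (3) Lag sums: S_far = O(1/delta) by comparison with int pi, and S_near = O(1/delta) if
      gamma0 < 1, S_near = O(ln(1/delta)/delta) if gamma0 = 1.
  With h = c n^(-1/5) one has n h^5 = c^5, so h^4 = c^5/(n h) is of the same order as the
  stochastic part.
*)

section \<open>Elementary sum estimates\<close>

text \<open>Concavity of \<open>t \<mapsto> t powr r\<close> for \<open>0 < r < 1\<close>, in the discrete form used for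
  telescoping: the increment from \<open>m - 1\<close> to \<open>m\<close> is at least \<open>r m\<^sup>r\<^sup>-\<^sup>1\<close>.\<close>

lemma powr_increment_ge:
  fixes r :: real and m :: nat
  assumes r: "0 < r" "r < 1" and m: "m \<ge> 1"
  shows "r * real m powr (r - 1) \<le> real m powr r - real (m - 1) powr r"
proof (cases "m = 1")
  case True
  then show ?thesis using r by simp
next
  case False
  then have m2: "m \<ge> 2" using m by simp
  define x where "x = real (m - 1) / real m"
  have x_pos: "x > 0" using m2 by (simp add: x_def)
  have "x powr r * 1 powr (1 - r) \<le> r * x + (1 - r) * 1"
    using Youngs_inequality_0[of r "1 - r" x 1] r x_pos by simp
  then have young: "x powr r \<le> r * x + (1 - r)" by simp
  have "real (m - 1) powr r = x powr r * real m powr r"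
    using m2 by (simp add: x_def powr_divide)
  also have "\<dots> \<le> (r * x + (1 - r)) * real m powr r"
    using young by (intro mult_right_mono) auto
  also have "\<dots> = real m powr r - r * (real m powr r / real m)"
    using m2 by (simp add: x_def of_nat_diff field_simps)
  also have "real m powr r / real m = real m powr (r - 1)"
    using m2 by (simp add: powr_diff)
  finally show ?thesis by simp
qed

lemma sum_powr_neg_le:
  fixes \<gamma> :: real
  assumes "0 < \<gamma>" "\<gamma> < 1"
  shows "(\<Sum>m=1..N. real m powr (-\<gamma>)) \<le> real N powr (1 - \<gamma>) / (1 - \<gamma>)"
proof (induction N)
  case 0
  then show ?case using assms by simp
next
  case (Suc N)
  have "(1 - \<gamma>) * real (Suc N) powr (-\<gamma>) \<le> real (Suc N) powr (1 - \<gamma>) - real N powr (1 - \<gamma>)"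
    using powr_increment_ge[of "1 - \<gamma>" "Suc N"] assms by simp
  then have "real (Suc N) powr (-\<gamma>) \<le> (real (Suc N) powr (1 - \<gamma>) - real N powr (1 - \<gamma>)) / (1 - \<gamma>)"
    using assms by (simp add: field_simps)
  with Suc show ?case by (simp add: diff_divide_distrib)
qed

lemma harmonic_sum_le:
  assumes "N \<ge> 1"
  shows "(\<Sum>m=1..N. 1 / real m) \<le> 1 + ln (real N)"
  using assms
proof (induction N rule: dec_induct)
  case base
  then show ?case by simp
next
  case (step N)
  have "ln (real N / real (Suc N)) \<le> real N / real (Suc N) - 1"
    using step by (intro ln_le_minus_one) auto
  also have "\<dots> = - 1 / real (Suc N)" by (simp add: field_simps)
  finally have "1 / real (Suc N) \<le> ln (real (Suc N)) - ln (real N)"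
    using step by (simp add: ln_div)
  with step show ?case by simp
qed

lemma sum_below_threshold_le:
  fixes g :: "nat \<Rightarrow> real"
  assumes d: "\<delta> > 0" and g0: "\<And>m. g m \<ge> 0"
  shows "(\<Sum>m=1..n. if real m * \<delta> \<le> L then g m else 0) \<le> (\<Sum>m=1..nat \<lfloor>L / \<delta>\<rfloor>. g m)"
proof -
  have "(\<Sum>m=1..n. if real m * \<delta> \<le> L then g m else 0) = (\<Sum>m\<in>{m\<in>{1..n}. real m * \<delta> \<le> L}. g m)"
    by (rule sum.inter_filter[symmetric]) simp
  also have "\<dots> \<le> (\<Sum>m=1..nat \<lfloor>L / \<delta>\<rfloor>. g m)"
  proof (rule sum_mono2)
    show "{m\<in>{1..n}. real m * \<delta> \<le> L} \<subseteq> {1..nat \<lfloor>L / \<delta>\<rfloor>}"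
    proof
      fix m assume m: "m \<in> {m\<in>{1..n}. real m * \<delta> \<le> L}"
      then have "real m \<le> L / \<delta>" using d by (simp add: field_simps)
      then have "int m \<le> \<lfloor>L / \<delta>\<rfloor>" by (simp add: le_floor_iff)
      then show "m \<in> {1..nat \<lfloor>L / \<delta>\<rfloor>}" using m by auto
    qed
  qed (auto intro: g0)
  finally show ?thesis .
qed

section \<open>Lag sums\<close>

text \<open>The covariance of two observations at lag \<open>m \<delta>\<close> is controlled by
  \<open>(m \<delta>)\<^sup>-\<^sup>\<gamma>\<^sup>0\<close> for short lags (\<open>m \<delta> \<le> u0\<close>) and by \<open>\<pi> (m \<delta>)\<close> for long lags; these are the
  two corresponding sums over the lags of an \<open>n\<close>-point sample.\<close>

definition near_lag_sum :: "real \<Rightarrow> real \<Rightarrow> real \<Rightarrow> nat \<Rightarrow> real" where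
  "near_lag_sum \<gamma> u0 \<delta> n = (\<Sum>m=1..n. if real m * \<delta> \<le> u0 then (real m * \<delta>) powr (-\<gamma>) else 0)"

definition far_lag_sum :: "(real \<Rightarrow> real) \<Rightarrow> real \<Rightarrow> real \<Rightarrow> nat \<Rightarrow> real" where
  "far_lag_sum \<pi> u0 \<delta> n = (\<Sum>m=1..n. if real m * \<delta> \<le> u0 then 0 else \<pi> (real m * \<delta>))"

lemma near_lag_sum_nonneg: "near_lag_sum \<gamma> u0 \<delta> n \<ge> 0"
  unfolding near_lag_sum_def by (intro sum_nonneg) auto

lemma far_lag_sum_nonneg:
  assumes "\<And>u. u \<ge> u0 \<Longrightarrow> \<pi> u \<ge> 0"
  shows "far_lag_sum \<pi> u0 \<delta> n \<ge> 0"
  unfolding far_lag_sum_def using assms by (intro sum_nonneg) auto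

lemma near_lag_sum_lt1:
  assumes d: "\<delta> > 0" and g: "0 < \<gamma>" "\<gamma> < 1" and u0: "u0 > 0"
  shows "near_lag_sum \<gamma> u0 \<delta> n \<le> u0 powr (1 - \<gamma>) / ((1 - \<gamma>) * \<delta>)"
proof -
  define N where "N = nat \<lfloor>u0 / \<delta>\<rfloor>"
  have N_le: "real N \<le> u0 / \<delta>" unfolding N_def using d u0 by (simp add: of_nat_nat)
  have "near_lag_sum \<gamma> u0 \<delta> n \<le> (\<Sum>m=1..N. (real m * \<delta>) powr (-\<gamma>))"
    unfolding near_lag_sum_def N_def using d by (intro sum_below_threshold_le) auto
  also have "\<dots> = \<delta> powr (-\<gamma>) * (\<Sum>m=1..N. real m powr (-\<gamma>))"
    using d by (simp add: powr_mult sum_distrib_left mult.commute)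
  also have "\<dots> \<le> \<delta> powr (-\<gamma>) * ((u0 / \<delta>) powr (1 - \<gamma>) / (1 - \<gamma>))"
  proof (intro mult_left_mono order.trans[OF sum_powr_neg_le[OF g]] divide_right_mono)
    show "real N powr (1 - \<gamma>) \<le> (u0 / \<delta>) powr (1 - \<gamma>)"
      using g N_le by (intro powr_mono2) auto
  qed (use g in auto)
  also have "\<delta> powr (-\<gamma>) * ((u0 / \<delta>) powr (1 - \<gamma>) / (1 - \<gamma>)) = u0 powr (1 - \<gamma>) / ((1 - \<gamma>) * \<delta>)"
  proof -
    have "\<delta> powr (-\<gamma>) * (u0 / \<delta>) powr (1 - \<gamma>) = u0 powr (1 - \<gamma>) * (\<delta> powr (-\<gamma>) / \<delta> powr (1 - \<gamma>))"
      using d u0 by (simp add: powr_divide)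
    also have "\<delta> powr (-\<gamma>) / \<delta> powr (1 - \<gamma>) = 1 / \<delta>"
      using d by (simp add: powr_diff[symmetric] powr_minus_divide powr_add[symmetric])
    finally show ?thesis by simp
  qed
  finally show ?thesis .
qed

lemma near_lag_sum_eq1:
  assumes d: "\<delta> > 0" "\<delta> \<le> u0"
  shows "near_lag_sum 1 u0 \<delta> n \<le> (1 + ln (u0 / \<delta>)) / \<delta>"
proof -
  define N where "N = nat \<lfloor>u0 / \<delta>\<rfloor>"
  have u0: "u0 > 0" using d by simp
  have N1: "N \<ge> 1" unfolding N_def using d by (simp add: le_nat_iff le_floor_iff)
  have N_le: "real N \<le> u0 / \<delta>" unfolding N_def using d u0 by (simp add: of_nat_nat)
  have "near_lag_sum 1 u0 \<delta> n \<le> (\<Sum>m=1..N. (real m * \<delta>) powr (-1))"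
    unfolding near_lag_sum_def N_def using d by (intro sum_below_threshold_le) auto
  also have "\<dots> = (1 / \<delta>) * (\<Sum>m=1..N. 1 / real m)"
    using d by (simp add: powr_minus_divide sum_distrib_left mult.commute)
  also have "\<dots> \<le> (1 / \<delta>) * (1 + ln (real N))"
    using d by (intro mult_left_mono harmonic_sum_le N1) simp
  also have "\<dots> \<le> (1 / \<delta>) * (1 + ln (u0 / \<delta>))"
    using d N1 N_le by (intro mult_left_mono add_left_mono ln_mono) auto
  finally show ?thesis by simp
qed

text \<open>The half-open cells \<open>((m - 1) \<delta>, m \<delta>]\<close> are pairwise disjoint.\<close>

lemma cell_indicator_sum_le1:
  fixes \<delta> x :: real
  assumes d: "\<delta> > 0" and T: "finite T"
  shows "(\<Sum>m\<in>T. indicator {(real m - 1) * \<delta> <.. real m * \<delta>} x) \<le> (1::ennreal)"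
proof -
  let ?S = "{m\<in>T. x \<in> {(real m - 1) * \<delta> <.. real m * \<delta>}}"
  have unique: "m1 = m2"
    if "x \<in> {(real m1 - 1) * \<delta> <.. real m1 * \<delta>}" "x \<in> {(real m2 - 1) * \<delta> <.. real m2 * \<delta>}"
    for m1 m2 :: nat
  proof -
    have "(real m1 - 1) * \<delta> < real m2 * \<delta>" "(real m2 - 1) * \<delta> < real m1 * \<delta>" using that by auto
    then have "real m1 - 1 < real m2" "real m2 - 1 < real m1" using d by (auto simp: mult_less_cancel_right)
    then show ?thesis by linarith
  qed
  have card: "card ?S \<le> Suc 0"
    using unique T by (subst card_le_Suc0_iff_eq) auto
  have "(\<Sum>m\<in>T. indicator {(real m - 1) * \<delta> <.. real m * \<delta>} x)
      = (\<Sum>m\<in>T. if x \<in> {(real m - 1) * \<delta> <.. real m * \<delta>} then (1::ennreal) else 0)"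
    by (intro sum.cong) (auto simp: indicator_def)
  also have "\<dots> = of_nat (card ?S)"
    by (simp add: sum.inter_filter[symmetric, OF T])
  also have "\<dots> \<le> 1" using card by simp
  finally show ?thesis .
qed

lemma cell_sum_le_integral:
  fixes p g :: "real \<Rightarrow> real"
  assumes d: "\<delta> > 0" and T: "finite T"
    and g: "integrable lborel g" "\<And>x. g x \<ge> 0"
    and p0: "\<And>m. m \<in> T \<Longrightarrow> p (real m * \<delta>) \<ge> 0"
    and dom: "\<And>m x. m \<in> T \<Longrightarrow> (real m - 1) * \<delta> < x \<Longrightarrow> x \<le> real m * \<delta> \<Longrightarrow> p (real m * \<delta>) \<le> g x"
  shows "\<delta> * (\<Sum>m\<in>T. p (real m * \<delta>)) \<le> integral\<^sup>L lborel g"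
proof -
  let ?cell = "\<lambda>m::nat. {(real m - 1) * \<delta> <.. real m * \<delta>}"
  have [measurable]: "g \<in> borel_measurable borel" using borel_measurable_integrable[OF g(1)] by simp
  have "ennreal (\<delta> * (\<Sum>m\<in>T. p (real m * \<delta>))) = (\<Sum>m\<in>T. ennreal (\<delta> * p (real m * \<delta>)))"
    using d p0 by (simp add: sum_distrib_left sum_ennreal)
  also have "\<dots> \<le> (\<Sum>m\<in>T. \<integral>\<^sup>+ x. ennreal (g x) * indicator (?cell m) x \<partial>lborel)"
  proof (intro sum_mono)
    fix m assume m: "m \<in> T"
    have "ennreal (\<delta> * p (real m * \<delta>)) = (\<integral>\<^sup>+ x. ennreal (p (real m * \<delta>)) * indicator (?cell m) x \<partial>lborel)"
      using d p0[OF m] by (subst nn_integral_cmult_indicator) (auto simp: ennreal_mult algebra_simps)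
    also have "\<dots> \<le> (\<integral>\<^sup>+ x. ennreal (g x) * indicator (?cell m) x \<partial>lborel)"
      using dom[OF m] by (intro nn_integral_mono) (auto simp: indicator_def intro: ennreal_leI)
    finally show "ennreal (\<delta> * p (real m * \<delta>)) \<le> (\<integral>\<^sup>+ x. ennreal (g x) * indicator (?cell m) x \<partial>lborel)" .
  qed
  also have "\<dots> = (\<integral>\<^sup>+ x. ennreal (g x) * (\<Sum>m\<in>T. indicator (?cell m) x) \<partial>lborel)"
    by (subst nn_integral_sum[symmetric]) (auto simp: sum_distrib_left)
  also have "\<dots> \<le> (\<integral>\<^sup>+ x. ennreal (g x) \<partial>lborel)"
    using cell_indicator_sum_le1[OF d T] by (intro nn_integral_mono) (metis mult.right_neutral mult_left_mono zero_le)
  also have "\<dots> = ennreal (integral\<^sup>L lborel g)" using g by (intro nn_integral_eq_integral) auto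
  finally show ?thesis using g by (simp add: ennreal_le_iff integral_nonneg_AE)
qed

lemma sum_bounded_terms_le:
  fixes p :: "nat \<Rightarrow> real"
  assumes d: "\<delta> > 0" and L: "L \<ge> 0" and B0: "B \<ge> 0"
    and T: "\<And>m. m \<in> T \<Longrightarrow> 1 \<le> m \<and> real m * \<delta> \<le> L"
    and B: "\<And>m. m \<in> T \<Longrightarrow> p m \<le> B"
  shows "(\<Sum>m\<in>T. p m) \<le> B * L / \<delta>"
proof -
  have sub: "T \<subseteq> {1..nat \<lfloor>L / \<delta>\<rfloor>}"
  proof
    fix m assume m: "m \<in> T"
    then have "real m \<le> L / \<delta>" using T[OF m] d by (simp add: field_simps)
    then have "int m \<le> \<lfloor>L / \<delta>\<rfloor>" by (simp add: le_floor_iff)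
    then show "m \<in> {1..nat \<lfloor>L / \<delta>\<rfloor>}" using T[OF m] by auto
  qed
  have "real (card T) \<le> real (nat \<lfloor>L / \<delta>\<rfloor>)"
    using card_mono[OF _ sub] by simp
  also have "\<dots> \<le> L / \<delta>" using L d by (simp add: of_nat_nat)
  finally have card: "real (card T) \<le> L / \<delta>" .
  have "(\<Sum>m\<in>T. p m) \<le> real (card T) * B" by (rule sum_bounded_above) (rule B)
  also have "\<dots> \<le> L / \<delta> * B" using card B0 by (rule mult_right_mono)
  finally show ?thesis by (simp add: mult.commute)
qed

text \<open>Lags up to a fixed threshold are bounded by
  counting, larger ones by comparison with \<open>\<integral> \<pi>\<close>.\<close>

lemma far_lag_sum_bound:
  fixes \<pi> :: "real \<Rightarrow> real"
  assumes u0: "u0 > 0" and u1: "u1 > u0" and bdd: "bounded (\<pi> ` {u0..})"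
    and dec: "\<exists>a. \<forall>u v. a \<le> u \<longrightarrow> u \<le> v \<longrightarrow> \<pi> v \<le> \<pi> u"
    and int: "set_integrable lborel {u1..} \<pi>"
    and pos: "\<And>u. u \<ge> u0 \<Longrightarrow> \<pi> u \<ge> 0"
  shows "\<exists>C. \<forall>\<delta> n. 0 < \<delta> \<longrightarrow> \<delta> \<le> 1 \<longrightarrow> far_lag_sum \<pi> u0 \<delta> n \<le> C / \<delta>"
proof -
  obtain a where a: "\<And>u v. a \<le> u \<Longrightarrow> u \<le> v \<Longrightarrow> \<pi> v \<le> \<pi> u" using dec by blast
  obtain B where B: "\<And>u. u \<ge> u0 \<Longrightarrow> \<bar>\<pi> u\<bar> \<le> B" using bdd by (auto simp: bounded_iff)
  have B0: "B \<ge> 0" using B[of u0] by simp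
  define A where "A = max a u1"
  have A0: "A \<ge> 0" using u0 u1 by (simp add: A_def)
  define g where "g x = indicator {u1..} x * \<pi> x" for x
  have g_int: "integrable lborel g" using int by (simp add: g_def[abs_def] set_integrable_def)
  have g0: "g x \<ge> 0" for x using pos u1 by (auto simp: g_def indicator_def)
  show ?thesis
  proof (intro exI[of _ "B * (A + 1) + integral\<^sup>L lborel g"] allI impI)
    fix \<delta> :: real and n :: nat
    assume d: "0 < \<delta>" "\<delta> \<le> 1"
    define T where "T = {m\<in>{1..n}. \<not> real m * \<delta> \<le> u0}"
    define T1 where "T1 = {m\<in>T. real m * \<delta> \<le> A + 1}"
    define T2 where "T2 = {m\<in>T. \<not> real m * \<delta> \<le> A + 1}"
    have fin: "finite T" "finite T2" by (auto simp: T_def T2_def)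
    have "far_lag_sum \<pi> u0 \<delta> n = (\<Sum>m\<in>T. \<pi> (real m * \<delta>))"
      unfolding far_lag_sum_def T_def by (subst sum.inter_filter) (auto intro!: sum.cong)
    also have "\<dots> = (\<Sum>m\<in>T1. \<pi> (real m * \<delta>)) + (\<Sum>m\<in>T2. \<pi> (real m * \<delta>))"
      unfolding T1_def T2_def using fin by (subst sum.union_disjoint[symmetric]) (auto intro!: sum.cong)
    also have "(\<Sum>m\<in>T1. \<pi> (real m * \<delta>)) \<le> B * (A + 1) / \<delta>"
      using d A0 B0 B by (intro sum_bounded_terms_le) (auto simp: T1_def T_def abs_le_iff)
    also have "(\<Sum>m\<in>T2. \<pi> (real m * \<delta>)) \<le> integral\<^sup>L lborel g / \<delta>"
    proof -
      have "\<delta> * (\<Sum>m\<in>T2. \<pi> (real m * \<delta>)) \<le> integral\<^sup>L lborel g"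
      proof (rule cell_sum_le_integral[OF d(1) fin(2) g_int g0])
        fix m assume "m \<in> T2"
        then have mA: "real m * \<delta> > A + 1" and mu0: "real m * \<delta> > u0" by (auto simp: T2_def T_def)
        show "\<pi> (real m * \<delta>) \<ge> 0" using pos mu0 by simp
        fix x assume x: "(real m - 1) * \<delta> < x" "x \<le> real m * \<delta>"
        then have "x > A" using mA d by (simp add: algebra_simps)
        then have "a \<le> x" "u1 \<le> x" by (auto simp: A_def)
        then show "\<pi> (real m * \<delta>) \<le> g x" using a x by (simp add: g_def)
      qed
      then show ?thesis using d by (simp add: field_simps)
    qed
    finally show "far_lag_sum \<pi> u0 \<delta> n \<le> (B * (A + 1) + integral\<^sup>L lborel g) / \<delta>"
      by (simp add: add_divide_distrib)
  qed
qed


section \<open>Grid cells and masses\<close>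

definition grid_cell :: "real \<Rightarrow> real \<Rightarrow> int \<Rightarrow> real set" where
  "grid_cell a h j = {a + real_of_int j * h ..< a + (real_of_int j + 1) * h}"

lemma grid_cell_sets [measurable]: "grid_cell a h j \<in> sets borel"
  by (simp add: grid_cell_def)

lemma grid_cell_eq: "grid_cell a h j = {a + real_of_int j * h ..< a + real_of_int j * h + h}"
  by (simp add: grid_cell_def algebra_simps)

lemma mem_grid_cell_iff:
  assumes h: "h > 0"
  shows "x \<in> grid_cell a h j \<longleftrightarrow> j = \<lfloor>(x - a) / h\<rfloor>"
proof -
  have "x \<in> grid_cell a h j \<longleftrightarrow> real_of_int j \<le> (x - a) / h \<and> (x - a) / h < real_of_int j + 1"
    using h by (auto simp: grid_cell_def field_simps)
  also have "\<dots> \<longleftrightarrow> j = \<lfloor>(x - a) / h\<rfloor>" by (metis floor_eq_iff)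
  finally show ?thesis .
qed

lemma nn_integral_grid_partition:
  fixes G :: "int \<Rightarrow> real \<Rightarrow> ennreal"
  assumes h: "h > 0" and meas: "\<And>j. G j \<in> borel_measurable lborel"
  shows "(\<integral>\<^sup>+ x. G \<lfloor>(x - a) / h\<rfloor> x \<partial>lborel) =
         (\<integral>\<^sup>+ j. \<integral>\<^sup>+ x. G j x * indicator (grid_cell a h j) x \<partial>lborel \<partial>count_space UNIV)"
proof -
  have "(\<integral>\<^sup>+ j. G j x * indicator (grid_cell a h j) x \<partial>count_space UNIV) = G \<lfloor>(x - a) / h\<rfloor> x" for x
  proof -
    have "(\<lambda>j. G j x * indicator (grid_cell a h j) x) = (\<lambda>j. G \<lfloor>(x - a) / h\<rfloor> x * indicator {\<lfloor>(x - a) / h\<rfloor>} j)"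
      using mem_grid_cell_iff[OF h] by (auto simp: indicator_def)
    then show ?thesis by (simp add: nn_integral_cmult_indicator)
  qed
  then have "(\<integral>\<^sup>+ x. G \<lfloor>(x - a) / h\<rfloor> x \<partial>lborel) =
      (\<integral>\<^sup>+ x. \<integral>\<^sup>+ j. G j x * indicator (grid_cell a h j) x \<partial>count_space UNIV \<partial>lborel)"
    by simp
  also have "\<dots> = (\<integral>\<^sup>+ j. \<integral>\<^sup>+ x. G j x * indicator (grid_cell a h j) x \<partial>lborel \<partial>count_space UNIV)"
    using meas by (intro nn_integral_count_space_nn_integral) auto
  finally show ?thesis .
qed

definition mass :: "(real \<Rightarrow> real) \<Rightarrow> real set \<Rightarrow> real" where
  "mass g B = enn2real (\<integral>\<^sup>+ y. ennreal (g y) * indicator B y \<partial>lborel)"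

lemma mass_nonneg: "mass g B \<ge> 0"
  by (simp add: mass_def)

lemma nn_integral_mass:
  assumes g: "integrable lborel g" "\<And>y. g y \<ge> 0"
  shows "(\<integral>\<^sup>+ y. ennreal (g y) * indicator B y \<partial>lborel) = ennreal (mass g B)"
proof -
  have "(\<integral>\<^sup>+ y. ennreal (g y) * indicator B y \<partial>lborel) \<le> (\<integral>\<^sup>+ y. ennreal (g y) \<partial>lborel)"
    by (intro nn_integral_mono) (auto simp: indicator_def)
  also have "\<dots> < \<infinity>" using g by (simp add: integrable_iff_bounded)
  finally show ?thesis unfolding mass_def by (simp add: less_top)
qed

lemma sum_mass_grid:
  assumes g: "integrable lborel g" "\<And>y. g y \<ge> 0" and h: "h > 0"
  shows "(\<integral>\<^sup>+ j. ennreal (mass g (grid_cell a h j)) \<partial>count_space UNIV) = ennreal (integral\<^sup>L lborel g)"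
proof -
  have [measurable]: "g \<in> borel_measurable borel" using borel_measurable_integrable[OF g(1)] by simp
  have "(\<integral>\<^sup>+ j. ennreal (mass g (grid_cell a h j)) \<partial>count_space UNIV)
      = (\<integral>\<^sup>+ j. \<integral>\<^sup>+ y. ennreal (g y) * indicator (grid_cell a h j) y \<partial>lborel \<partial>count_space UNIV)"
    using g by (simp add: nn_integral_mass)
  also have "\<dots> = (\<integral>\<^sup>+ y. ennreal (g y) \<partial>lborel)"
    using nn_integral_grid_partition[OF h, of "\<lambda>j y. ennreal (g y)" a] by simp
  also have "\<dots> = ennreal (integral\<^sup>L lborel g)"
    using g by (intro nn_integral_eq_integral) auto
  finally show ?thesis .
qed

lemma mass_interval:
  assumes gc: "continuous_on UNIV g" and g0: "\<And>y. g y \<ge> 0"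
  shows "mass g {b..<b+h} = integral {b..b+h} g"
proof -
  have "(\<integral>\<^sup>+ y. ennreal (g y) * indicator {b..<b+h} y \<partial>lborel)
      = (\<integral>\<^sup>+ y. ennreal (g y) * indicator {b..b+h} y \<partial>lborel)"
    by (rule nn_integral_cong_AE)
      (use AE_lborel_singleton[of "b+h"] in \<open>eventually_elim, auto simp: indicator_def\<close>)
  also have "\<dots> = ennreal (integral {b..b+h} g)"
    by (rule nn_integral_has_integral_lebesgue')
      (auto intro!: g0 integrable_integral integrable_continuous_real continuous_on_subset[OF gc])
  moreover have "integral {b..b+h} g \<ge> 0"
    by (intro integral_nonneg integrable_continuous_real continuous_on_subset[OF gc]) (auto simp: g0)
  ultimately show ?thesis unfolding mass_def by simp
qed

section \<open>Real analysis on a window of width 4h\<close>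

lemma derivative_increment_le:
  fixes f1 f2 :: "real \<Rightarrow> real"
  assumes d2f: "\<And>x. (f1 has_real_derivative f2 x) (at x)"
    and f2c: "continuous_on UNIV f2" and ab: "a \<le> b"
  shows "\<bar>f1 b - f1 a\<bar> \<le> integral {a..b} (\<lambda>t. \<bar>f2 t\<bar>)"
proof -
  have "(f2 has_integral (f1 b - f1 a)) {a..b}"
    using ab d2f by (intro fundamental_theorem_of_calculus)
      (auto simp: has_real_derivative_iff_has_vector_derivative[symmetric] intro: has_field_derivative_at_within)
  then have "f1 b - f1 a = integral {a..b} f2" by (simp add: integral_unique)
  moreover have "norm (integral {a..b} f2) \<le> integral {a..b} (\<lambda>t. \<bar>f2 t\<bar>)"
    by (intro integral_norm_bound_integral integrable_continuous_real continuous_on_subset[OF f2c]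
        continuous_on_rabs) auto
  ultimately show ?thesis by simp
qed

lemma taylor1_remainder_le:
  fixes f f1 f2 :: "real \<Rightarrow> real"
  assumes d1f: "\<And>x. (f has_real_derivative f1 x) (at x)"
    and d2f: "\<And>x. (f1 has_real_derivative f2 x) (at x)"
    and f2c: "continuous_on UNIV f2"
    and y: "\<bar>y - x\<bar> \<le> 2 * h"
  shows "\<bar>f y - f x - f1 x * (y - x)\<bar> \<le> \<bar>y - x\<bar> * integral {x - 2*h..x + 2*h} (\<lambda>t. \<bar>f2 t\<bar>)"
proof -
  let ?G = "integral {x - 2*h..x + 2*h} (\<lambda>t. \<bar>f2 t\<bar>)"
  have window: "integral {a..b} (\<lambda>t. \<bar>f2 t\<bar>) \<le> ?G" if "{a..b} \<subseteq> {x - 2*h..x + 2*h}" for a b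
    using that by (intro integral_subset_le integrable_continuous_real continuous_on_rabs
        continuous_on_subset[OF f2c]) auto
  have f1_dev: "\<bar>f1 s - f1 x\<bar> \<le> ?G" if "\<bar>s - x\<bar> \<le> 2 * h" for s
  proof (cases "x \<le> s")
    case True
    then show ?thesis
      using that derivative_increment_le[OF d2f f2c True] window[of x s] by auto
  next
    case False
    then show ?thesis
      using that derivative_increment_le[OF d2f f2c, of s x] window[of s x] by auto
  qed
  define g where "g s = f s - f1 x * s" for s
  have dg: "DERIV g s :> f1 s - f1 x" for s
    unfolding g_def by (auto intro!: derivative_eq_intros d1f)
  show ?thesis
  proof (cases "y = x")
    case True
    then show ?thesis by simp
  next
    case False
    have "\<exists>z. min x y < z \<and> z < max x y \<and>
        g (max x y) - g (min x y) = (max x y - min x y) * (f1 z - f1 x)"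
      using False by (intro MVT2 dg) auto
    then obtain z where z: "min x y < z" "z < max x y"
      and mvt: "g (max x y) - g (min x y) = (max x y - min x y) * (f1 z - f1 x)" by blast
    have "\<bar>f y - f x - f1 x * (y - x)\<bar> = \<bar>g y - g x\<bar>" by (simp add: g_def algebra_simps)
    also have "\<dots> = \<bar>y - x\<bar> * \<bar>f1 z - f1 x\<bar>"
      using mvt by (cases "x \<le> y") (auto simp: abs_mult max_def min_def abs_minus_commute[of "g y"])
    also have "\<dots> \<le> \<bar>y - x\<bar> * ?G"
      using z y by (intro mult_left_mono f1_dev) auto
    finally show ?thesis .
  qed
qed

lemma cell_average_expansion:
  fixes f f1 f2 :: "real \<Rightarrow> real"
  assumes d1f: "\<And>x. (f has_real_derivative f1 x) (at x)"
    and d2f: "\<And>x. (f1 has_real_derivative f2 x) (at x)"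
    and f2c: "continuous_on UNIV f2"
    and h: "h > 0" and b1: "x - 2*h \<le> b" and b2: "b + h \<le> x + 2*h"
  shows "\<bar>integral {b..b+h} f / h - f x - f1 x * (b + h/2 - x)\<bar>
          \<le> 2 * h * integral {x - 2*h..x + 2*h} (\<lambda>t. \<bar>f2 t\<bar>)"
proof -
  let ?G = "integral {x - 2*h..x + 2*h} (\<lambda>t. \<bar>f2 t\<bar>)"
  let ?R = "integral {b..b+h} f - h * f x - f1 x * (h * (b + h/2 - x))"
  have fc: "continuous_on UNIV f"
    using d1f by (meson DERIV_isCont continuous_at_imp_continuous_on)
  have G0: "0 \<le> ?G"
    by (intro integral_nonneg integrable_continuous_real continuous_on_rabs
        continuous_on_subset[OF f2c]) auto
  have lin: "((\<lambda>y. y - x) has_integral (h * (b + h/2 - x))) {b..b+h}"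
  proof -
    have "((\<lambda>y. y - x) has_integral ((b + h - x)^2/2 - (b - x)^2/2)) {b..b+h}"
      using h by (intro fundamental_theorem_of_calculus)
        (auto simp: has_real_derivative_iff_has_vector_derivative[symmetric] intro!: derivative_eq_intros)
    moreover have "(b + h - x)^2/2 - (b - x)^2/2 = h * (b + h/2 - x)"
      by (simp add: power2_eq_square field_simps)
    ultimately show ?thesis by simp
  qed
  have fi: "(f has_integral integral {b..b+h} f) {b..b+h}"
    by (intro integrable_integral integrable_continuous_real continuous_on_subset[OF fc]) auto
  have R: "((\<lambda>y. f y - f x - f1 x * (y - x)) has_integral ?R) {b..b+h}"
    using h by (intro has_integral_diff fi has_integral_mult_right lin)
      (use has_integral_const_real[of "f x" b "b+h"] in auto)
  have "norm (integral {b..b+h} (\<lambda>y. f y - f x - f1 x * (y - x))) \<le> integral {b..b+h} (\<lambda>y. 2 * h * ?G)"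
  proof (intro integral_norm_bound_integral)
    show "(\<lambda>y. f y - f x - f1 x * (y - x)) integrable_on {b..b+h}" using R by blast
  next
    fix y assume "y \<in> {b..b+h}"
    then have yx: "\<bar>y - x\<bar> \<le> 2 * h" using b1 b2 by auto
    have "\<bar>f y - f x - f1 x * (y - x)\<bar> \<le> \<bar>y - x\<bar> * ?G"
      by (rule taylor1_remainder_le[OF d1f d2f f2c yx])
    also have "\<dots> \<le> 2 * h * ?G" using yx G0 by (intro mult_right_mono) auto
    finally show "norm (f y - f x - f1 x * (y - x)) \<le> 2 * h * ?G" by simp
  qed auto
  then have "\<bar>?R\<bar> \<le> h * (2 * h * ?G)" using R h by (simp add: integral_unique)
  moreover have "integral {b..b+h} f / h - f x - f1 x * (b + h/2 - x) = ?R / h"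
    using h by (simp add: field_simps)
  ultimately show ?thesis using h by (simp add: abs_divide divide_le_eq mult.commute)
qed

text \<open>Linear interpolation between the averages over two adjacent cells reproduces \<open>f\<close>
  between their midpoints up to \<open>2h\<close> times the window norm of \<open>f''\<close>: the first-order
  terms of the two cell expansions interpolate exactly.\<close>

lemma polygon_interpolation_error:
  fixes f f1 f2 :: "real \<Rightarrow> real"
  assumes d1f: "\<And>x. (f has_real_derivative f1 x) (at x)"
    and d2f: "\<And>x. (f1 has_real_derivative f2 x) (at x)"
    and f2c: "continuous_on UNIV f2"
    and h: "h > 0" and x1: "b + h/2 \<le> x" and x2: "x < b + h/2 + h"
  shows "\<bar>((x - (b + h/2))/h) * (integral {b+h..b+h+h} f / h)
            + (1 - (x - (b + h/2))/h) * (integral {b..b+h} f / h) - f x\<bar>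
         \<le> 2 * h * integral {x - 2*h..x + 2*h} (\<lambda>t. \<bar>f2 t\<bar>)"
proof -
  let ?G = "integral {x - 2*h..x + 2*h} (\<lambda>t. \<bar>f2 t\<bar>)"
  define l where "l = (x - (b + h/2))/h"
  have l: "0 \<le> l" "l \<le> 1" using x1 x2 h by (auto simp: l_def field_simps)
  define e0 where "e0 = integral {b..b+h} f / h - f x - f1 x * (b + h/2 - x)"
  define e1 where "e1 = integral {b+h..b+h+h} f / h - f x - f1 x * (b + h + h/2 - x)"
  have e0: "\<bar>e0\<bar> \<le> 2 * h * ?G" unfolding e0_def
    by (rule cell_average_expansion[OF d1f d2f f2c h]) (use x1 x2 h in auto)
  have e1: "\<bar>e1\<bar> \<le> 2 * h * ?G" unfolding e1_def
    by (rule cell_average_expansion[OF d1f d2f f2c h]) (use x1 x2 h in auto)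
  have "l * (integral {b+h..b+h+h} f / h) + (1 - l) * (integral {b..b+h} f / h) - f x
      = l * e1 + (1 - l) * e0"
    unfolding e0_def e1_def l_def using h by (simp add: field_simps)
  also have "\<bar>l * e1 + (1 - l) * e0\<bar> \<le> l * \<bar>e1\<bar> + (1 - l) * \<bar>e0\<bar>"
    using l abs_triangle_ineq[of "l * e1" "(1 - l) * e0"] by (simp add: abs_mult)
  also have "\<dots> \<le> l * (2 * h * ?G) + (1 - l) * (2 * h * ?G)"
    using l e0 e1 by (intro add_mono mult_left_mono) auto
  also have "\<dots> = 2 * h * ?G" by (simp add: algebra_simps)
  finally show ?thesis unfolding l_def .
qed

lemma integral_abs_sq_le:
  fixes g :: "real \<Rightarrow> real"
  assumes gc: "continuous_on UNIV g" and ab: "a < b"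
  shows "(integral {a..b} (\<lambda>t. \<bar>g t\<bar>))^2 \<le> (b - a) * integral {a..b} (\<lambda>t. (g t)^2)"
proof -
  define I where "I = integral {a..b} (\<lambda>t. \<bar>g t\<bar>)"
  define Q where "Q = integral {a..b} (\<lambda>t. (g t)^2)"
  define L where "L = b - a"
  have L: "L > 0" using ab by (simp add: L_def)
  have i1: "((\<lambda>t. \<bar>g t\<bar>) has_integral I) {a..b}" unfolding I_def
    by (intro integrable_integral integrable_continuous_real continuous_on_rabs continuous_on_subset[OF gc]) auto
  have i2: "((\<lambda>t. (g t)^2) has_integral Q) {a..b}" unfolding Q_def
    by (intro integrable_integral integrable_continuous_real continuous_intros continuous_on_subset[OF gc]) auto
  have i3: "((\<lambda>t. (\<bar>g t\<bar> - I / L)^2) has_integral (Q - 2 * (I / L) * I + (I / L)^2 * L)) {a..b}"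
  proof -
    have "((\<lambda>t. (g t)^2 - 2 * (I / L) * \<bar>g t\<bar> + (I / L)^2) has_integral (Q - 2 * (I / L) * I + (I / L)^2 * L)) {a..b}"
      using ab by (intro has_integral_add has_integral_diff i2 has_integral_mult_right i1)
        (use has_integral_const_real[of "(I / L)^2" a b] in \<open>auto simp: L_def mult.commute\<close>)
    moreover have "(\<lambda>t. (g t)^2 - 2 * (I / L) * \<bar>g t\<bar> + (I / L)^2) = (\<lambda>t. (\<bar>g t\<bar> - I / L)^2)"
      by (simp add: power2_eq_square algebra_simps)
    ultimately show ?thesis by simp
  qed
  have "0 \<le> Q - 2 * (I / L) * I + (I / L)^2 * L"
    by (rule has_integral_nonneg[OF i3]) simp
  also have "Q - 2 * (I / L) * I + (I / L)^2 * L = Q - I^2 / L"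
    using L by (simp add: power2_eq_square field_simps)
  finally have "I^2 / L \<le> Q" by simp
  then show ?thesis using L by (simp add: I_def Q_def L_def[symmetric] divide_le_eq mult.commute)
qed

lemma nn_integral_window:
  fixes q :: "real \<Rightarrow> real"
  assumes qc: "continuous_on UNIV q" and q0: "\<And>t. q t \<ge> 0" and h: "h > 0"
  shows "(\<integral>\<^sup>+ x. ennreal (integral {x - 2*h..x + 2*h} q) \<partial>lborel)
       = ennreal (4 * h) * (\<integral>\<^sup>+ t. ennreal (q t) \<partial>lborel)"
proof -
  have [measurable]: "q \<in> borel_measurable borel"
    using qc by (intro borel_measurable_continuous_onI) auto
  have "\<And>x. ennreal (integral {x - 2*h..x + 2*h} q) = (\<integral>\<^sup>+ t. ennreal (q t) * indicator {x - 2*h..x + 2*h} t \<partial>lborel)"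
    by (rule nn_integral_has_integral_lebesgue'[symmetric])
      (auto intro!: q0 integrable_integral integrable_continuous_real continuous_on_subset[OF qc])
  then have "(\<integral>\<^sup>+ x. ennreal (integral {x - 2*h..x + 2*h} q) \<partial>lborel) =
     (\<integral>\<^sup>+ x. \<integral>\<^sup>+ t. ennreal (q t) * indicator {x - 2*h..x + 2*h} t \<partial>lborel \<partial>lborel)" by simp
  also have "\<dots> = (\<integral>\<^sup>+ t. \<integral>\<^sup>+ x. ennreal (q t) * indicator {x - 2*h..x + 2*h} t \<partial>lborel \<partial>lborel)"
  proof (rule lborel_pair.Fubini'[symmetric])
    define S where "S = {p \<in> space (lborel \<Otimes>\<^sub>M lborel). fst p - 2*h \<le> snd p \<and> snd p \<le> fst p + 2*h}"
    have [measurable]: "S \<in> sets (lborel \<Otimes>\<^sub>M lborel)" unfolding S_def by measurable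
    have "(\<lambda>(x, t). ennreal (q t) * indicator {x - 2*h..x + 2*h} t) = (\<lambda>p. ennreal (q (snd p)) * indicator S p)"
      by (auto simp: S_def indicator_def fun_eq_iff space_pair_measure)
    moreover have "(\<lambda>p. ennreal (q (snd p)) * indicator S p) \<in> borel_measurable (lborel \<Otimes>\<^sub>M lborel)"
      by measurable
    ultimately show "(\<lambda>(x, t). ennreal (q t) * indicator {x - 2*h..x + 2*h} t) \<in> borel_measurable (lborel \<Otimes>\<^sub>M lborel)"
      by simp
  qed
  also have "\<dots> = (\<integral>\<^sup>+ t. ennreal (q t) * ennreal (4 * h) \<partial>lborel)"
  proof (rule nn_integral_cong)
    fix t
    have "(\<lambda>x. ennreal (q t) * indicator {x - 2*h..x + 2*h} t) = (\<lambda>x. ennreal (q t) * indicator {t - 2*h..t + 2*h} x)"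
      by (intro ext) (smt (verit) indicator_simps(1) indicator_simps(2) atLeastAtMost_iff)
    then show "(\<integral>\<^sup>+ x. ennreal (q t) * indicator {x - 2*h..x + 2*h} t \<partial>lborel) = ennreal (q t) * ennreal (4 * h)"
      using h by (simp add: nn_integral_cmult_indicator)
  qed
  also have "\<dots> = ennreal (4 * h) * (\<integral>\<^sup>+ t. ennreal (q t) \<partial>lborel)"
    by (subst nn_integral_multc) (auto simp: mult.commute)
  finally show ?thesis .
qed

lemma sq_convex_comb_plus_le:
  fixes l u v b :: real
  assumes "0 \<le> l" "l \<le> 1"
  shows "(l * u + (1 - l) * v + b)^2 \<le> 2 * (u^2 + v^2) + 2 * b^2"
proof -
  have "(l * u + (1 - l) * v + b)^2 \<le> 2 * (l * u + (1 - l) * v)^2 + 2 * b^2"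
    using zero_le_power2[of "l * u + (1 - l) * v - b"] by (simp add: power2_eq_square algebra_simps)
  moreover have "2 * (l * u + (1 - l) * v)^2 \<le> 2 * (u^2 + v^2)"
  proof -
    have "(l * u + (1 - l) * v)^2 = l * u^2 + (1 - l) * v^2 - l * (1 - l) * (u - v)^2"
      by (simp add: power2_eq_square algebra_simps)
    moreover have "l * (1 - l) * (u - v)^2 \<ge> 0" using assms by simp
    moreover have "l * u^2 + (1 - l) * v^2 \<le> u^2 + v^2"
      using assms by (smt (verit) mult_left_le_one_le zero_le_power2)
    ultimately have "(l * u + (1 - l) * v)^2 \<le> u^2 + v^2" by linarith
    then show ?thesis by simp
  qed
  ultimately show ?thesis by linarith
qed

section \<open>The sampled process and the variance of a bin height\<close>

lemma nn_integral_square_product: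
  fixes g1 g2 :: "real \<Rightarrow> ennreal"
  assumes [measurable]: "g1 \<in> borel_measurable borel" "g2 \<in> borel_measurable borel" "B \<in> sets borel"
  shows "(\<integral>\<^sup>+p. g1 (fst p) * g2 (snd p) * indicator (B \<times> B) p \<partial>(lborel \<Otimes>\<^sub>M lborel))
       = (\<integral>\<^sup>+y. g1 y * indicator B y \<partial>lborel) * (\<integral>\<^sup>+z. g2 z * indicator B z \<partial>lborel)"
proof -
  have "(\<integral>\<^sup>+p. g1 (fst p) * g2 (snd p) * indicator (B \<times> B) p \<partial>(lborel \<Otimes>\<^sub>M lborel))
      = (\<integral>\<^sup>+y. \<integral>\<^sup>+z. g1 y * g2 z * indicator (B \<times> B) (y, z) \<partial>lborel \<partial>lborel)"
    by (subst lborel.nn_integral_fst[symmetric]) auto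
  also have "\<dots> = (\<integral>\<^sup>+y. (g1 y * indicator B y) * (\<integral>\<^sup>+z. g2 z * indicator B z \<partial>lborel) \<partial>lborel)"
    by (intro nn_integral_cong)
      (auto simp: indicator_def nn_integral_cmult[symmetric] mult_ac intro!: nn_integral_cong)
  also have "\<dots> = (\<integral>\<^sup>+y. g1 y * indicator B y \<partial>lborel) * (\<integral>\<^sup>+z. g2 z * indicator B z \<partial>lborel)"
    by (rule nn_integral_multc) auto
  finally show ?thesis .
qed

lemma sum_lag_terms_le:
  fixes W :: "nat \<Rightarrow> real"
  assumes W0: "\<And>m. W m \<ge> 0" and k: "k \<in> {1..n}"
  shows "(\<Sum>l\<in>{1..n}-{k}. W (if k \<le> l then l - k else k - l)) \<le> 2 * (\<Sum>m=1..n. W m)"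
proof -
  have split: "{1..n}-{k} = {1..<k} \<union> {k<..n}" using k by auto
  have below: "(\<Sum>l\<in>{1..<k}. W (k - l)) \<le> (\<Sum>m=1..n. W m)"
  proof -
    have "(\<Sum>l\<in>{1..<k}. W (k - l)) = (\<Sum>m\<in>(\<lambda>l. k - l) ` {1..<k}. W m)"
      by (subst sum.reindex) (auto simp: inj_on_def)
    also have "\<dots> \<le> (\<Sum>m=1..n. W m)"
      using k by (intro sum_mono2) (auto intro: W0)
    finally show ?thesis .
  qed
  have above: "(\<Sum>l\<in>{k<..n}. W (l - k)) \<le> (\<Sum>m=1..n. W m)"
  proof -
    have "(\<Sum>l\<in>{k<..n}. W (l - k)) = (\<Sum>m\<in>(\<lambda>l. l - k) ` {k<..n}. W m)"
      by (subst sum.reindex) (auto simp: inj_on_def)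
    also have "\<dots> \<le> (\<Sum>m=1..n. W m)"
      using k by (intro sum_mono2) (auto intro: W0)
    finally show ?thesis .
  qed
  have "(\<Sum>l\<in>{1..n}-{k}. W (if k \<le> l then l - k else k - l))
      = (\<Sum>l\<in>{1..<k}. W (k - l)) + (\<Sum>l\<in>{k<..n}. W (l - k))"
    unfolding split by (subst sum.union_disjoint) (auto intro!: sum.cong)
  then show ?thesis using below above by simp
qed

text \<open>The sampled process: \<open>X t\<close> has density \<open>f\<close>, \<open>(X s, X t)\<close> has density
  \<open>fu |t - s|\<close>, which is controlled near the diagonal in time by \<open>\<phi> y u\<^sup>-\<^sup>\<gamma>\<^sup>0\<close> (A1'(i)) and
  deviates from \<open>f y f z\<close> by at most \<open>k y \<pi> u\<close> for large lags (A1'(ii)).\<close>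

locale dependent_sampling = prob_space M for M :: "'w measure" +
  fixes X :: "real \<Rightarrow> 'w \<Rightarrow> real" and f :: "real \<Rightarrow> real"
    and fu :: "real \<Rightarrow> real \<Rightarrow> real \<Rightarrow> real"
    and \<phi> k \<pi> :: "real \<Rightarrow> real" and \<gamma>0 u0 u1 :: real
  assumes f_nonneg: "\<And>x. f x \<ge> 0"
    and dens: "\<And>t. distributed M lborel (X t) (\<lambda>x. ennreal (f x))"
    and joint: "\<And>s t. s \<noteq> t \<Longrightarrow>
        distributed M (lborel \<Otimes>\<^sub>M lborel) (\<lambda>\<omega>. (X s \<omega>, X t \<omega>))
          (\<lambda>(y, z). ennreal (fu \<bar>t - s\<bar> y z))"
    and \<gamma>0_pos: "\<gamma>0 > 0" and u0_pos: "u0 > 0"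
    and \<phi>_nonneg: "\<And>y. \<phi> y \<ge> 0" and \<phi>_int: "integrable lborel \<phi>"
    and A1i: "\<And>u y z. 0 < u \<Longrightarrow> u \<le> u0 \<Longrightarrow> fu u y z \<le> \<phi> y * u powr (- \<gamma>0)"
    and k_pos: "\<And>y. k y > 0" and k_int: "integrable lborel k"
    and \<pi>_bdd: "bounded (\<pi> ` {u0..})"
    and \<pi>_ult_dec: "\<exists>a. \<forall>u v. a \<le> u \<longrightarrow> u \<le> v \<longrightarrow> \<pi> v \<le> \<pi> u"
    and u1: "u1 > u0" and \<pi>_int: "set_integrable lborel {u1..} \<pi>"
    and A1ii: "\<And>u y z. u \<ge> u0 \<Longrightarrow> \<bar>fu u y z - f y * f z\<bar> \<le> k y * \<pi> u"
begin

lemma X_meas [measurable]: "X t \<in> borel_measurable M"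
  using distributed_measurable[OF dens[of t]] by simp

lemma f_meas [measurable]: "f \<in> borel_measurable borel"
  using distributed_real_measurable[OF _ dens[of 0]] f_nonneg by simp

lemma \<phi>_meas [measurable]: "\<phi> \<in> borel_measurable borel"
  using borel_measurable_integrable[OF \<phi>_int] by simp

lemma k_meas [measurable]: "k \<in> borel_measurable borel"
  using borel_measurable_integrable[OF k_int] by simp

lemma k_nonneg: "k y \<ge> 0"
  using k_pos[of y] by simp

lemma integral_\<phi>_nonneg: "integral\<^sup>L lborel \<phi> \<ge> 0"
  using \<phi>_nonneg by (intro integral_nonneg_AE) auto

lemma integral_k_nonneg: "integral\<^sup>L lborel k \<ge> 0"
  using k_nonneg by (intro integral_nonneg_AE) auto

lemma f_total: "(\<integral>\<^sup>+ y. ennreal (f y) \<partial>lborel) = 1"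
proof -
  have "emeasure M (X 0 -` UNIV \<inter> space M) = (\<integral>\<^sup>+ y. ennreal (f y) * indicator UNIV y \<partial>lborel)"
    by (rule distributed_emeasure[OF dens]) simp
  then show ?thesis by (simp add: emeasure_space_1)
qed

lemma f_int: "integrable lborel f"
  using f_total f_nonneg by (simp add: integrable_iff_bounded)

lemma integral_f: "integral\<^sup>L lborel f = 1"
  using nn_integral_eq_integral[OF f_int] f_total f_nonneg by simp

text \<open>The long-lag bound forces \<open>\<pi> \<ge> 0\<close>, since \<open>k > 0\<close>.\<close>

lemma \<pi>_nonneg: "u \<ge> u0 \<Longrightarrow> \<pi> u \<ge> 0"
  using A1ii[of u 0 0] k_pos[of 0] by (smt (verit) zero_le_mult_iff)

lemma far_lag_sum_le: "\<exists>C. \<forall>\<delta> n. 0 < \<delta> \<longrightarrow> \<delta> \<le> 1 \<longrightarrow> far_lag_sum \<pi> u0 \<delta> n \<le> C / \<delta>"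
  by (rule far_lag_sum_bound[OF u0_pos u1 \<pi>_bdd \<pi>_ult_dec \<pi>_int \<pi>_nonneg])

lemma indicator_mean:
  assumes [measurable]: "B \<in> sets borel"
  shows "integrable M (\<lambda>\<omega>. indicator B (X t \<omega>) :: real)"
    and "(\<integral>\<omega>. indicator B (X t \<omega>) \<partial>M) = mass f B"
proof -
  have "(\<integral>\<^sup>+ \<omega>. ennreal (indicator B (X t \<omega>)) \<partial>M) = (\<integral>\<^sup>+ y. ennreal (f y) * indicator B y \<partial>lborel)"
    by (subst distributed_nn_integral[OF dens, symmetric]) (auto simp: indicator_def intro!: nn_integral_cong)
  also have "\<dots> = ennreal (mass f B)" by (rule nn_integral_mass[OF f_int f_nonneg])
  finally have "integrable M (\<lambda>\<omega>. indicator B (X t \<omega>) :: real) \<and> (\<integral>\<omega>. indicator B (X t \<omega>) \<partial>M) = mass f B"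
    by (subst nn_integral_eq_integrable[symmetric]) (auto simp: mass_nonneg)
  then show "integrable M (\<lambda>\<omega>. indicator B (X t \<omega>) :: real)" "(\<integral>\<omega>. indicator B (X t \<omega>) \<partial>M) = mass f B"
    by auto
qed

lemma indicator_pair_moment:
  assumes [measurable]: "B \<in> sets borel" and st: "s \<noteq> t"
  shows "ennreal (\<integral>\<omega>. indicator B (X s \<omega>) * indicator B (X t \<omega>) \<partial>M)
       = (\<integral>\<^sup>+p. (\<lambda>(y, z). ennreal (fu \<bar>t - s\<bar> y z)) p * indicator (B \<times> B) p \<partial>(lborel \<Otimes>\<^sub>M lborel))"
proof -
  have "ennreal (\<integral>\<omega>. indicator B (X s \<omega>) * indicator B (X t \<omega>) \<partial>M)
      = (\<integral>\<^sup>+\<omega>. ennreal (indicator B (X s \<omega>) * indicator B (X t \<omega>)) \<partial>M)"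
    by (rule nn_integral_eq_integral[symmetric])
      (auto intro!: integrable_const_bound[where B=1] simp: indicator_def)
  also have "\<dots> = (\<integral>\<^sup>+p. (\<lambda>(y, z). ennreal (fu \<bar>t - s\<bar> y z)) p * indicator (B \<times> B) p \<partial>(lborel \<Otimes>\<^sub>M lborel))"
    by (subst distributed_nn_integral[OF joint[OF st]]) (auto simp: indicator_def intro!: nn_integral_cong)
  finally show ?thesis .
qed

lemma indicator_pair_moment_near:
  assumes st: "s \<noteq> t" and u: "\<bar>t - s\<bar> \<le> u0" and h: "h > 0"
  shows "(\<integral>\<omega>. indicator {b..<b+h} (X s \<omega>) * indicator {b..<b+h} (X t \<omega>) \<partial>M)
         \<le> h * (\<bar>t - s\<bar> powr (-\<gamma>0) * mass \<phi> {b..<b+h})"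
proof -
  let ?B = "{b..<b+h}" let ?u = "\<bar>t - s\<bar>"
  have u_pos: "?u > 0" using st by simp
  have "ennreal (\<integral>\<omega>. indicator ?B (X s \<omega>) * indicator ?B (X t \<omega>) \<partial>M)
      \<le> (\<integral>\<^sup>+p. ennreal (\<phi> (fst p) * ?u powr (-\<gamma>0)) * ennreal 1 * indicator (?B \<times> ?B) p \<partial>(lborel \<Otimes>\<^sub>M lborel))"
    unfolding indicator_pair_moment[OF _ st, of ?B, simplified]
    by (intro nn_integral_mono) (auto simp: indicator_def split: prod.split intro!: ennreal_leI A1i u_pos u)
  also have "\<dots> = (\<integral>\<^sup>+y. ennreal (\<phi> y * ?u powr (-\<gamma>0)) * indicator ?B y \<partial>lborel)
      * (\<integral>\<^sup>+z. ennreal 1 * indicator ?B z \<partial>lborel)"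
    by (rule nn_integral_square_product) auto
  also have "(\<integral>\<^sup>+z. ennreal 1 * indicator ?B z \<partial>lborel) = ennreal h" using h by simp
  also have "(\<integral>\<^sup>+y. ennreal (\<phi> y * ?u powr (-\<gamma>0)) * indicator ?B y \<partial>lborel)
      = ennreal (?u powr (-\<gamma>0)) * (\<integral>\<^sup>+y. ennreal (\<phi> y) * indicator ?B y \<partial>lborel)"
    using \<phi>_nonneg by (subst nn_integral_cmult[symmetric]) (auto simp: ennreal_mult mult_ac)
  also have "(\<integral>\<^sup>+y. ennreal (\<phi> y) * indicator ?B y \<partial>lborel) = ennreal (mass \<phi> ?B)"
    by (rule nn_integral_mass[OF \<phi>_int \<phi>_nonneg])
  finally have "ennreal (\<integral>\<omega>. indicator ?B (X s \<omega>) * indicator ?B (X t \<omega>) \<partial>M)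
      \<le> ennreal (h * (?u powr (-\<gamma>0) * mass \<phi> ?B))"
    using h by (simp add: ennreal_mult mass_nonneg mult_ac)
  then show ?thesis using h by (simp add: ennreal_le_iff mass_nonneg)
qed

lemma indicator_pair_moment_far:
  assumes st: "s \<noteq> t" and u: "\<bar>t - s\<bar> \<ge> u0" and h: "h > 0"
  shows "(\<integral>\<omega>. indicator {b..<b+h} (X s \<omega>) * indicator {b..<b+h} (X t \<omega>) \<partial>M)
         \<le> (mass f {b..<b+h})^2 + h * (\<pi> \<bar>t - s\<bar> * mass k {b..<b+h})"
proof -
  let ?B = "{b..<b+h}" let ?u = "\<bar>t - s\<bar>"
  have pi0: "\<pi> ?u \<ge> 0" using \<pi>_nonneg u by simp
  have "ennreal (\<integral>\<omega>. indicator ?B (X s \<omega>) * indicator ?B (X t \<omega>) \<partial>M)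
      \<le> (\<integral>\<^sup>+p. ennreal (f (fst p)) * ennreal (f (snd p)) * indicator (?B \<times> ?B) p
           + ennreal (k (fst p) * \<pi> ?u) * ennreal 1 * indicator (?B \<times> ?B) p \<partial>(lborel \<Otimes>\<^sub>M lborel))"
    unfolding indicator_pair_moment[OF _ st, of ?B, simplified]
  proof (intro nn_integral_mono)
    fix p :: "real \<times> real"
    obtain y z where p: "p = (y, z)" by (cases p)
    have "fu ?u y z \<le> f y * f z + k y * \<pi> ?u"
      using A1ii[OF u, of y z] by simp
    then have "ennreal (fu ?u y z) \<le> ennreal (f y) * ennreal (f z) + ennreal (k y * \<pi> ?u)"
      using f_nonneg k_nonneg[of y] pi0
      by (simp add: ennreal_mult[symmetric] ennreal_plus[symmetric] ennreal_leI del: ennreal_plus)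
    then show "(\<lambda>(y, z). ennreal (fu ?u y z)) p * indicator (?B \<times> ?B) p
        \<le> ennreal (f (fst p)) * ennreal (f (snd p)) * indicator (?B \<times> ?B) p
          + ennreal (k (fst p) * \<pi> ?u) * ennreal 1 * indicator (?B \<times> ?B) p"
      by (auto simp: p indicator_def)
  qed
  also have "\<dots> = (\<integral>\<^sup>+p. ennreal (f (fst p)) * ennreal (f (snd p)) * indicator (?B \<times> ?B) p \<partial>(lborel \<Otimes>\<^sub>M lborel))
       + (\<integral>\<^sup>+p. ennreal (k (fst p) * \<pi> ?u) * ennreal 1 * indicator (?B \<times> ?B) p \<partial>(lborel \<Otimes>\<^sub>M lborel))"
    by (rule nn_integral_add) auto
  also have "(\<integral>\<^sup>+p. ennreal (f (fst p)) * ennreal (f (snd p)) * indicator (?B \<times> ?B) p \<partial>(lborel \<Otimes>\<^sub>M lborel))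
      = ennreal (mass f ?B) * ennreal (mass f ?B)"
    by (subst nn_integral_square_product) (auto simp: nn_integral_mass[OF f_int f_nonneg])
  also have "(\<integral>\<^sup>+p. ennreal (k (fst p) * \<pi> ?u) * ennreal 1 * indicator (?B \<times> ?B) p \<partial>(lborel \<Otimes>\<^sub>M lborel))
      = (\<integral>\<^sup>+y. ennreal (k y * \<pi> ?u) * indicator ?B y \<partial>lborel) * (\<integral>\<^sup>+z. ennreal 1 * indicator ?B z \<partial>lborel)"
    by (rule nn_integral_square_product) auto
  also have "(\<integral>\<^sup>+z. ennreal 1 * indicator ?B z \<partial>lborel) = ennreal h" using h by simp
  also have "(\<integral>\<^sup>+y. ennreal (k y * \<pi> ?u) * indicator ?B y \<partial>lborel)
      = ennreal (\<pi> ?u) * (\<integral>\<^sup>+y. ennreal (k y) * indicator ?B y \<partial>lborel)"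
    using k_nonneg pi0 by (subst nn_integral_cmult[symmetric]) (auto simp: ennreal_mult mult_ac)
  also have "(\<integral>\<^sup>+y. ennreal (k y) * indicator ?B y \<partial>lborel) = ennreal (mass k ?B)"
    by (rule nn_integral_mass[OF k_int k_nonneg])
  finally have "ennreal (\<integral>\<omega>. indicator ?B (X s \<omega>) * indicator ?B (X t \<omega>) \<partial>M)
      \<le> ennreal ((mass f ?B)^2 + h * (\<pi> ?u * mass k ?B))"
    using h pi0 by (simp add: ennreal_mult mass_nonneg mult_ac power2_eq_square ennreal_plus)
  then show ?thesis using h pi0 mass_nonneg[of k ?B]
    by (simp add: ennreal_plus[symmetric] ennreal_le_iff del: ennreal_plus)
qed

lemma indicator_cov_le:
  assumes st: "s \<noteq> t" and h: "h > 0"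
  shows "(\<integral>\<omega>. (indicator {b..<b+h} (X s \<omega>) - mass f {b..<b+h}) * (indicator {b..<b+h} (X t \<omega>) - mass f {b..<b+h}) \<partial>M)
    \<le> h * (if \<bar>t - s\<bar> \<le> u0 then \<bar>t - s\<bar> powr (-\<gamma>0) * mass \<phi> {b..<b+h} else \<pi> \<bar>t - s\<bar> * mass k {b..<b+h})"
proof -
  let ?B = "{b..<b+h}" let ?p = "mass f {b..<b+h}"
  let ?Y = "\<lambda>t \<omega>. indicator ?B (X t \<omega>) :: real"
  have "(\<lambda>\<omega>. (?Y s \<omega> - ?p) * (?Y t \<omega> - ?p)) = (\<lambda>\<omega>. (?Y s \<omega> * ?Y t \<omega> - ?p * ?Y s \<omega>) - (?p * ?Y t \<omega> - ?p^2))"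
    by (auto simp: algebra_simps power2_eq_square)
  moreover have "integrable M (\<lambda>\<omega>. ?Y s \<omega> * ?Y t \<omega>)"
    by (auto intro!: integrable_const_bound[where B=1] simp: indicator_def)
  ultimately have cov: "(\<integral>\<omega>. (?Y s \<omega> - ?p) * (?Y t \<omega> - ?p) \<partial>M) = (\<integral>\<omega>. ?Y s \<omega> * ?Y t \<omega> \<partial>M) - ?p^2"
    using indicator_mean[of ?B] prob_space by (simp add: power2_eq_square)
  show ?thesis
  proof (cases "\<bar>t - s\<bar> \<le> u0")
    case True
    have "(\<integral>\<omega>. (?Y s \<omega> - ?p) * (?Y t \<omega> - ?p) \<partial>M) \<le> h * (\<bar>t - s\<bar> powr (-\<gamma>0) * mass \<phi> ?B)"
      using cov indicator_pair_moment_near[OF st True h, of b] zero_le_power2[of ?p] by linarith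
    then show ?thesis using True by simp
  next
    case False
    have "(\<integral>\<omega>. (?Y s \<omega> - ?p) * (?Y t \<omega> - ?p) \<partial>M) \<le> h * (\<pi> \<bar>t - s\<bar> * mass k ?B)"
      using cov indicator_pair_moment_far[OF st _ h, of b] False by linarith
    then show ?thesis using False by simp
  qed
qed

definition bin_var_bound :: "real \<Rightarrow> real \<Rightarrow> nat \<Rightarrow> real set \<Rightarrow> real" where
  "bin_var_bound \<delta> h n B = mass f B / (real n * h^2)
     + 2 * (mass \<phi> B * near_lag_sum \<gamma>0 u0 \<delta> n + mass k B * far_lag_sum \<pi> u0 \<delta> n) / (real n * h)"

lemma bin_var_bound_nonneg:
  assumes "h > 0" "\<delta> > 0"
  shows "bin_var_bound \<delta> h n B \<ge> 0"
  unfolding bin_var_bound_def using assms near_lag_sum_nonneg far_lag_sum_nonneg[OF \<pi>_nonneg]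
  by (intro add_nonneg_nonneg divide_nonneg_nonneg mult_nonneg_nonneg) (auto simp: mass_nonneg)

lemma centred_indicator_prod_integrable:
  assumes [measurable]: "B \<in> sets borel"
  shows "integrable M (\<lambda>\<omega>. (indicator B (X s \<omega>) - p) * (indicator B (X t \<omega>) - p) :: real)"
proof -
  have "(\<lambda>\<omega>. (indicator B (X s \<omega>) - p) * (indicator B (X t \<omega>) - p) :: real)
      = (\<lambda>\<omega>. (indicator B (X s \<omega>) * indicator B (X t \<omega>) - p * indicator B (X s \<omega>)) - (p * indicator B (X t \<omega>) - p^2))"
    by (auto simp: algebra_simps power2_eq_square)
  moreover have "integrable M (\<lambda>\<omega>. indicator B (X s \<omega>) * indicator B (X t \<omega>) :: real)"
    by (auto intro!: integrable_const_bound[where B=1] simp: indicator_def)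
  ultimately show ?thesis using indicator_mean(1)[of B] by simp
qed

lemma indicator_var_le:
  assumes [measurable]: "B \<in> sets borel"
  shows "(\<integral>\<omega>. (indicator B (X t \<omega>) - mass f B) * (indicator B (X t \<omega>) - mass f B) \<partial>M) \<le> mass f B"
proof -
  let ?p = "mass f B"
  have "(\<lambda>\<omega>. (indicator B (X t \<omega>) - ?p) * (indicator B (X t \<omega>) - ?p)) = (\<lambda>\<omega>. (1 - 2 * ?p) * indicator B (X t \<omega>) + ?p^2)"
    by (auto simp: indicator_def power2_eq_square algebra_simps)
  then have "(\<integral>\<omega>. (indicator B (X t \<omega>) - ?p) * (indicator B (X t \<omega>) - ?p) \<partial>M) = (1 - 2 * ?p) * ?p + ?p^2"
    using indicator_mean[of B t] prob_space by simp
  also have "\<dots> = ?p - ?p^2" by (simp add: power2_eq_square algebra_simps)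
  finally show ?thesis using zero_le_power2[of ?p] by linarith
qed

lemma indicator_cov_sum_le:
  assumes h: "h > 0" and d: "\<delta> > 0"
  shows "(\<Sum>i\<in>{1..n}. \<Sum>l\<in>{1..n}. \<integral>\<omega>. (indicator {b..<b+h} (X (real i * \<delta>) \<omega>) - mass f {b..<b+h})
            * (indicator {b..<b+h} (X (real l * \<delta>) \<omega>) - mass f {b..<b+h}) \<partial>M)
    \<le> real n * (mass f {b..<b+h} + 2 * h * (mass \<phi> {b..<b+h} * near_lag_sum \<gamma>0 u0 \<delta> n
                                          + mass k {b..<b+h} * far_lag_sum \<pi> u0 \<delta> n))"
proof -
  define B where "B = {b..<b+h}"
  define c where "c i l = (\<integral>\<omega>. (indicator B (X (real i * \<delta>) \<omega>) - mass f B)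
                                * (indicator B (X (real l * \<delta>) \<omega>) - mass f B) \<partial>M)" for i l :: nat
  define W where "W m = h * (if real m * \<delta> \<le> u0 then (real m * \<delta>) powr (-\<gamma>0) * mass \<phi> B
                                else \<pi> (real m * \<delta>) * mass k B)" for m :: nat
  have W0: "W m \<ge> 0" for m
    unfolding W_def using h d by (auto simp: mass_nonneg intro!: mult_nonneg_nonneg \<pi>_nonneg)
  have off_diag: "c i l \<le> W (if i \<le> l then l - i else i - l)" if "i \<noteq> l" for i l
  proof -
    have lag: "\<bar>real l * \<delta> - real i * \<delta>\<bar> = real (if i \<le> l then l - i else i - l) * \<delta>"
      using d by (auto simp: abs_if of_nat_diff algebra_simps)
    show ?thesis
      using indicator_cov_le[of "real i * \<delta>" "real l * \<delta>" h b] that d h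
      unfolding c_def W_def B_def lag by (simp add: mult_ac)
  qed
  have row: "(\<Sum>l\<in>{1..n}. c i l) \<le> mass f B + 2 * (\<Sum>m=1..n. W m)" if i: "i \<in> {1..n}" for i
  proof -
    have "(\<Sum>l\<in>{1..n}. c i l) = c i i + (\<Sum>l\<in>{1..n}-{i}. c i l)"
      using i by (subst sum.remove[of _ i]) auto
    also have "\<dots> \<le> mass f B + (\<Sum>l\<in>{1..n}-{i}. W (if i \<le> l then l - i else i - l))"
      using indicator_var_le off_diag unfolding c_def B_def by (intro add_mono sum_mono) auto
    also have "\<dots> \<le> mass f B + 2 * (\<Sum>m=1..n. W m)"
      using sum_lag_terms_le[OF W0 i] by simp
    finally show ?thesis .
  qed
  have "(\<Sum>m=1..n. W m) = h * (mass \<phi> B * near_lag_sum \<gamma>0 u0 \<delta> n + mass k B * far_lag_sum \<pi> u0 \<delta> n)"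
    unfolding W_def near_lag_sum_def far_lag_sum_def
    by (simp add: sum_distrib_left algebra_simps sum.distrib[symmetric]) (intro sum.cong; simp)
  then have "(\<Sum>i\<in>{1..n}. \<Sum>l\<in>{1..n}. c i l) \<le> (\<Sum>i\<in>{1..n}. mass f B + 2 * h * (mass \<phi> B * near_lag_sum \<gamma>0 u0 \<delta> n
      + mass k B * far_lag_sum \<pi> u0 \<delta> n))"
    using row by (intro sum_mono) (simp add: mult.assoc)
  then show ?thesis unfolding c_def B_def by simp
qed

text \<open>Variance of a bin height: the squared deviation is \<open>(n h)\<^sup>-\<^sup>2\<close> times the double sum of
  products of centred indicators.\<close>

lemma bin_height_variance_le:
  assumes n: "n \<ge> 1" and h: "h > 0" and d: "\<delta> > 0"
  shows "(\<integral>\<omega>. (fp_bin X \<delta> h x0 n j \<omega> - mass f (grid_cell x0 h j) / h)^2 \<partial>M)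
    \<le> bin_var_bound \<delta> h n (grid_cell x0 h j)"
proof -
  define b where "b = x0 + real_of_int j * h"
  define B where "B = {b..<b+h}"
  define p where "p = mass f B"
  define Y where "Y i \<omega> = (indicator B (X (real i * \<delta>) \<omega>) :: real)" for i \<omega>
  have cell: "grid_cell x0 h j = B" by (simp add: B_def b_def grid_cell_eq)
  have square: "(fp_bin X \<delta> h x0 n j \<omega> - p / h)^2
      = (1 / (real n * h))^2 * (\<Sum>i\<in>{1..n}. \<Sum>l\<in>{1..n}. (Y i \<omega> - p) * (Y l \<omega> - p))" for \<omega>
  proof -
    have "fp_bin X \<delta> h x0 n j \<omega> - p / h = (1 / (real n * h)) * (\<Sum>i\<in>{1..n}. (Y i \<omega> - p))"
      using n h cell by (simp add: fp_bin_def grid_cell_def Y_def sum_subtractf field_simps)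
    then show ?thesis by (simp add: power2_eq_square sum_product)
  qed
  have "(\<integral>\<omega>. (fp_bin X \<delta> h x0 n j \<omega> - p / h)^2 \<partial>M)
      = (1 / (real n * h))^2 * (\<Sum>i\<in>{1..n}. \<Sum>l\<in>{1..n}. \<integral>\<omega>. (Y i \<omega> - p) * (Y l \<omega> - p) \<partial>M)"
    unfolding square Y_def B_def by (simp add: centred_indicator_prod_integrable)
  also have "\<dots> \<le> (1 / (real n * h))^2 * (real n * (p + 2 * h * (mass \<phi> B * near_lag_sum \<gamma>0 u0 \<delta> n
                                          + mass k B * far_lag_sum \<pi> u0 \<delta> n)))"
    unfolding Y_def p_def B_def by (intro mult_left_mono indicator_cov_sum_le h d) simp
  also have "\<dots> = bin_var_bound \<delta> h n B"
    unfolding bin_var_bound_def p_def using n h by (simp add: field_simps power2_eq_square)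
  finally show ?thesis unfolding cell p_def .
qed

end

section \<open>Error decomposition of the frequency polygon\<close>

definition bin_dev :: "(real \<Rightarrow> 'w \<Rightarrow> real) \<Rightarrow> (real \<Rightarrow> real) \<Rightarrow> real \<Rightarrow> real \<Rightarrow> real \<Rightarrow> nat \<Rightarrow> int \<Rightarrow> 'w \<Rightarrow> real" where
  "bin_dev X f \<delta> h x0 n j \<omega> = (fp_bin X \<delta> h x0 n j \<omega> - mass f (grid_cell x0 h j) / h)^2"

text \<open>The polygon through the bin means (the pointwise mean of the estimator); its
  deviation from \<open>f\<close> is the bias.\<close>

definition fp_mean_polygon :: "(real \<Rightarrow> real) \<Rightarrow> real \<Rightarrow> real \<Rightarrow> real \<Rightarrow> real" where
  "fp_mean_polygon f h x0 x =
     (let j = \<lfloor>(x - x0 - h / 2) / h\<rfloor>;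
          cj = x0 + (real_of_int j + 1 / 2) * h;
          cj1 = x0 + (real_of_int j + 1 + 1 / 2) * h
      in ((x - cj) / h) * (mass f (grid_cell x0 h (j + 1)) / h)
         + ((cj1 - x) / h) * (mass f (grid_cell x0 h j) / h))"

lemma bin_dev_nonneg: "bin_dev X f \<delta> h x0 n j \<omega> \<ge> 0"
  by (simp add: bin_dev_def)

lemma fp_mean_polygon_measurable [measurable]: "(\<lambda>x. fp_mean_polygon f h x0 x) \<in> borel_measurable borel"
  unfolding fp_mean_polygon_def Let_def by measurable

lemma between_midpoints:
  fixes h x a :: real
  assumes h: "h > 0"
  defines "j \<equiv> \<lfloor>(x - a - h / 2) / h\<rfloor>"
  shows "a + (real_of_int j + 1/2) * h \<le> x \<and> x < a + (real_of_int j + 1/2) * h + h"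
proof -
  have "x \<in> grid_cell (a + h/2) h j"
    using mem_grid_cell_iff[OF h] by (simp add: j_def algebra_simps)
  then show ?thesis by (auto simp: grid_cell_def algebra_simps)
qed

lemma fp_est_sq_error_le:
  fixes h x x0 :: real
  assumes h: "h > 0"
  defines "j \<equiv> \<lfloor>(x - x0 - h / 2) / h\<rfloor>"
  shows "(fp_est X \<delta> h x0 n \<omega> x - f x)^2
    \<le> 2 * (bin_dev X f \<delta> h x0 n (j + 1) \<omega> + bin_dev X f \<delta> h x0 n j \<omega>)
      + 2 * (fp_mean_polygon f h x0 x - f x)^2"
proof -
  define c where "c = x0 + (real_of_int j + 1/2) * h"
  define l where "l = (x - c) / h"
  define m where "m i = mass f (grid_cell x0 h i) / h" for i
  have l: "0 \<le> l" "l \<le> 1"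
    using between_midpoints[OF h, where x=x and a=x0] h by (auto simp: l_def c_def j_def field_simps)
  have weight: "(x0 + (real_of_int j + 1 + 1/2) * h - x) / h = 1 - l"
    using h by (simp add: l_def c_def field_simps)
  have "fp_est X \<delta> h x0 n \<omega> x - f x
      = l * (fp_bin X \<delta> h x0 n (j + 1) \<omega> - m (j + 1)) + (1 - l) * (fp_bin X \<delta> h x0 n j \<omega> - m j)
        + (fp_mean_polygon f h x0 x - f x)"
    unfolding fp_est_def fp_mean_polygon_def Let_def j_def[symmetric] c_def[symmetric] l_def[symmetric]
      weight m_def by (simp add: algebra_simps)
  also have "(\<dots>)^2 \<le> 2 * ((fp_bin X \<delta> h x0 n (j + 1) \<omega> - m (j + 1))^2 + (fp_bin X \<delta> h x0 n j \<omega> - m j)^2)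
      + 2 * (fp_mean_polygon f h x0 x - f x)^2"
    by (rule sq_convex_comb_plus_le[OF l])
  finally show ?thesis by (simp add: bin_dev_def m_def)
qed

text \<open>Integrating the decomposition over the cells between consecutive midpoints: every
  such cell has length \<open>h\<close> and carries the deviations of its two bins.\<close>

lemma integrated_error_le_cells:
  assumes h: "h > 0" and [measurable]: "f \<in> borel_measurable borel"
  shows "(\<integral>\<^sup>+ x. ennreal ((fp_est X \<delta> h x0 n \<omega> x - f x)^2) \<partial>lborel)
    \<le> (\<integral>\<^sup>+ j. ennreal (2 * h * (bin_dev X f \<delta> h x0 n (j + 1) \<omega> + bin_dev X f \<delta> h x0 n j \<omega>))
          + (\<integral>\<^sup>+ x. ennreal (2 * (fp_mean_polygon f h x0 x - f x)^2) * indicator (grid_cell (x0 + h/2) h j) x \<partial>lborel)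
        \<partial>count_space UNIV)"
proof -
  let ?D = "\<lambda>j. 2 * (bin_dev X f \<delta> h x0 n (j + 1) \<omega> + bin_dev X f \<delta> h x0 n j \<omega>)"
  let ?b = "\<lambda>x. 2 * (fp_mean_polygon f h x0 x - f x)^2"
  define G where "G j x = ennreal (?D j) + ennreal (?b x)" for j x
  have "(\<integral>\<^sup>+ x. ennreal ((fp_est X \<delta> h x0 n \<omega> x - f x)^2) \<partial>lborel)
      \<le> (\<integral>\<^sup>+ x. G \<lfloor>(x - (x0 + h/2)) / h\<rfloor> x \<partial>lborel)"
  proof (intro nn_integral_mono)
    fix x
    have "ennreal ((fp_est X \<delta> h x0 n \<omega> x - f x)^2) \<le> ennreal (?D \<lfloor>(x - x0 - h / 2) / h\<rfloor> + ?b x)"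
      by (intro ennreal_leI fp_est_sq_error_le h)
    then show "ennreal ((fp_est X \<delta> h x0 n \<omega> x - f x)^2) \<le> G \<lfloor>(x - (x0 + h/2)) / h\<rfloor> x"
      by (simp add: G_def bin_dev_nonneg ennreal_plus[symmetric] diff_diff_eq del: ennreal_plus)
  qed
  also have "\<dots> = (\<integral>\<^sup>+ j. \<integral>\<^sup>+ x. G j x * indicator (grid_cell (x0 + h/2) h j) x \<partial>lborel \<partial>count_space UNIV)"
    by (rule nn_integral_grid_partition[OF h]) (simp add: G_def)
  also have "\<dots> = (\<integral>\<^sup>+ j. ennreal (h * ?D j)
      + (\<integral>\<^sup>+ x. ennreal (?b x) * indicator (grid_cell (x0 + h/2) h j) x \<partial>lborel) \<partial>count_space UNIV)"
  proof (intro nn_integral_cong)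
    fix j :: int
    have cell: "emeasure lborel (grid_cell (x0 + h/2) h j) = ennreal h"
      using h by (simp add: grid_cell_def algebra_simps)
    have "(\<integral>\<^sup>+ x. G j x * indicator (grid_cell (x0 + h/2) h j) x \<partial>lborel)
        = (\<integral>\<^sup>+ x. ennreal (?D j) * indicator (grid_cell (x0 + h/2) h j) x \<partial>lborel)
          + (\<integral>\<^sup>+ x. ennreal (?b x) * indicator (grid_cell (x0 + h/2) h j) x \<partial>lborel)"
      unfolding G_def distrib_right by (rule nn_integral_add) auto
    also have "(\<integral>\<^sup>+ x. ennreal (?D j) * indicator (grid_cell (x0 + h/2) h j) x \<partial>lborel) = ennreal (?D j) * ennreal h"
      by (metis cell grid_cell_sets nn_integral_cmult_indicator sets_lborel)
    also have "ennreal (?D j) * ennreal h = ennreal (h * ?D j)"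
      using h by (simp add: ennreal_mult bin_dev_nonneg mult.commute)
    finally show "(\<integral>\<^sup>+ x. G j x * indicator (grid_cell (x0 + h/2) h j) x \<partial>lborel)
        = ennreal (h * ?D j) + (\<integral>\<^sup>+ x. ennreal (?b x) * indicator (grid_cell (x0 + h/2) h j) x \<partial>lborel)" .
  qed
  finally show ?thesis by (simp add: algebra_simps)
qed

section \<open>Bias of the frequency polygon for a \<open>C\<^sup>2\<close> density\<close>

text \<open>The model of the paper with assumption A0': a twice continuously differentiable
  density with square integrable second derivative.\<close>

locale smooth_dependent_sampling = dependent_sampling +
  fixes f1 f2 :: "real \<Rightarrow> real"
  assumes d1f: "\<And>x. (f has_real_derivative f1 x) (at x)"
    and d2f: "\<And>x. (f1 has_real_derivative f2 x) (at x)"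
    and f2_cont: "continuous_on UNIV f2"
    and f2_L2: "integrable lborel (\<lambda>x. (f2 x)\<^sup>2)"
begin

lemma f_cont: "continuous_on UNIV f"
  using d1f by (meson DERIV_isCont continuous_at_imp_continuous_on)

lemma polygon_bias_le:
  assumes h: "h > 0"
  shows "\<bar>fp_mean_polygon f h x0 x - f x\<bar> \<le> 2 * h * integral {x - 2*h..x + 2*h} (\<lambda>t. \<bar>f2 t\<bar>)"
proof -
  define j where "j = \<lfloor>(x - x0 - h / 2) / h\<rfloor>"
  define b where "b = x0 + real_of_int j * h"
  have cells: "grid_cell x0 h j = {b..<b+h}" "grid_cell x0 h (j + 1) = {b+h..<b+h+h}"
    by (simp_all add: grid_cell_eq b_def algebra_simps)
  have mid: "x0 + (real_of_int j + 1/2) * h = b + h/2" "x0 + (real_of_int j + 1 + 1/2) * h = b + h/2 + h"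
    by (simp_all add: b_def algebra_simps)
  have weight: "(b + h/2 + h - x) / h = 1 - (x - (b + h/2)) / h"
    using h by (simp add: field_simps)
  have "fp_mean_polygon f h x0 x
      = ((x - (b + h/2))/h) * (integral {b+h..b+h+h} f / h) + (1 - (x - (b + h/2))/h) * (integral {b..b+h} f / h)"
    unfolding fp_mean_polygon_def Let_def j_def[symmetric] cells mid weight
    using mass_interval[OF f_cont f_nonneg, of b h] mass_interval[OF f_cont f_nonneg, of "b+h" h]
    by simp
  also have "\<bar>\<dots> - f x\<bar> \<le> 2 * h * integral {x - 2*h..x + 2*h} (\<lambda>t. \<bar>f2 t\<bar>)"
    using between_midpoints[OF h, where x=x and a=x0] mid
    by (intro polygon_interpolation_error[OF d1f d2f f2_cont h]) (auto simp: j_def[symmetric])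
  finally show ?thesis .
qed

text \<open>Squaring the pointwise
  bound and applying Cauchy-Schwarz on the window gives \<open>2 b(x)\<^sup>2 \<le> 32 h\<^sup>3 \<integral>\<^sub>x\<^sub>-\<^sub>2\<^sub>h\<^sup>x\<^sup>+\<^sup>2\<^sup>h f''\<^sup>2\<close>.\<close>

lemma integrated_sq_bias_le:
  assumes h: "h > 0"
  shows "(\<integral>\<^sup>+ x. ennreal (2 * (fp_mean_polygon f h x0 x - f x)^2) \<partial>lborel)
    \<le> ennreal (128 * h^4 * integral\<^sup>L lborel (\<lambda>x. (f2 x)^2))"
proof -
  define Q where "Q = integral\<^sup>L lborel (\<lambda>x. (f2 x)^2)"
  have pointwise: "2 * (fp_mean_polygon f h x0 x - f x)^2 \<le> integral {x - 2*h..x + 2*h} (\<lambda>t. 32 * h^3 * (f2 t)^2)"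
    for x
  proof -
    define G where "G = integral {x - 2*h..x + 2*h} (\<lambda>t. \<bar>f2 t\<bar>)"
    define I where "I = integral {x - 2*h..x + 2*h} (\<lambda>t. (f2 t)^2)"
    have G0: "G \<ge> 0" unfolding G_def
      by (intro integral_nonneg integrable_continuous_real continuous_on_rabs continuous_on_subset[OF f2_cont]) auto
    have "(fp_mean_polygon f h x0 x - f x)^2 \<le> (2 * h * G)^2"
      unfolding abs_le_square_iff[symmetric] using polygon_bias_le[OF h, of x0 x] G0 h
      by (simp add: G_def abs_mult)
    also have "\<dots> = 4 * h^2 * G^2" by (simp add: power_mult_distrib)
    also have "G^2 \<le> ((x + 2*h) - (x - 2*h)) * I"
      unfolding G_def I_def by (rule integral_abs_sq_le[OF f2_cont]) (use h in simp)
    finally have "(fp_mean_polygon f h x0 x - f x)^2 \<le> 4 * h^2 * ((x + 2*h) - (x - 2*h)) * I"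
      using h by (simp add: mult_left_mono)
    also have "4 * h^2 * ((x + 2*h) - (x - 2*h)) * I = 16 * h^3 * I"
      by (simp add: power2_eq_square power3_eq_cube algebra_simps)
    finally have "2 * (fp_mean_polygon f h x0 x - f x)^2 \<le> 32 * h^3 * I" by linarith
    moreover have "integral {x - 2*h..x + 2*h} (\<lambda>t. 32 * h^3 * (f2 t)^2) = 32 * h^3 * I"
      unfolding I_def by simp
    ultimately show ?thesis by linarith
  qed
  have "(\<integral>\<^sup>+ x. ennreal (2 * (fp_mean_polygon f h x0 x - f x)^2) \<partial>lborel)
      \<le> (\<integral>\<^sup>+ x. ennreal (integral {x - 2*h..x + 2*h} (\<lambda>t. 32 * h^3 * (f2 t)^2)) \<partial>lborel)"
    by (intro nn_integral_mono ennreal_leI pointwise)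
  also have "\<dots> = ennreal (4 * h) * (\<integral>\<^sup>+ t. ennreal (32 * h^3 * (f2 t)^2) \<partial>lborel)"
    using h by (intro nn_integral_window) (auto intro!: continuous_intros f2_cont)
  also have "(\<integral>\<^sup>+ t. ennreal (32 * h^3 * (f2 t)^2) \<partial>lborel) = ennreal (32 * h^3 * Q)"
    unfolding Q_def using f2_L2 h by (subst nn_integral_eq_integral) auto
  also have "ennreal (4 * h) * ennreal (32 * h^3 * Q) = ennreal (128 * h^4 * Q)"
    using h by (simp add: Q_def ennreal_mult[symmetric] power_numeral_reduce algebra_simps)
  finally show ?thesis unfolding Q_def .
qed

end

section \<open>The mean integrated squared error\<close>

text \<open>A bin height is a relative frequency divided by \<open>h\<close>.\<close>

lemma fp_bin_bounds:
  assumes n: "n \<ge> 1" and h: "h > 0"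
  shows "0 \<le> fp_bin X \<delta> h x0 n j \<omega>" "fp_bin X \<delta> h x0 n j \<omega> \<le> 1 / h"
proof -
  let ?S = "\<Sum>k\<in>{1..n}. indicator {x0 + real_of_int j * h ..< x0 + (real_of_int j + 1) * h} (X (real k * \<delta>) \<omega>) :: real"
  have "?S \<le> real (card {1..n}) * 1" by (rule sum_bounded_above) (auto simp: indicator_def)
  moreover have "?S \<ge> 0" by (intro sum_nonneg) auto
  ultimately show "0 \<le> fp_bin X \<delta> h x0 n j \<omega>" "fp_bin X \<delta> h x0 n j \<omega> \<le> 1 / h"
    using n h unfolding fp_bin_def by (auto simp: field_simps)
qed

context dependent_sampling
begin

lemma bin_dev_measurable [measurable]: "bin_dev X f \<delta> h x0 n j \<in> borel_measurable M"
  unfolding bin_dev_def fp_bin_def by measurable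

lemma expected_bin_dev_le:
  assumes n: "n \<ge> 1" and h: "h > 0" and d: "\<delta> > 0"
  shows "(\<integral>\<^sup>+ \<omega>. ennreal (bin_dev X f \<delta> h x0 n j \<omega>) \<partial>M) \<le> ennreal (bin_var_bound \<delta> h n (grid_cell x0 h j))"
proof -
  let ?m = "mass f (grid_cell x0 h j) / h"
  have "integrable M (bin_dev X f \<delta> h x0 n j)"
  proof (rule integrable_const_bound[where B="(1/h + \<bar>?m\<bar>)^2"])
    show "AE \<omega> in M. norm (bin_dev X f \<delta> h x0 n j \<omega>) \<le> (1/h + \<bar>?m\<bar>)^2"
    proof (intro AE_I2)
      fix \<omega>
      have "\<bar>fp_bin X \<delta> h x0 n j \<omega> - ?m\<bar> \<le> 1/h + \<bar>?m\<bar>"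
        using fp_bin_bounds[OF n h, of X \<delta> x0 j \<omega>] by (smt (verit))
      then show "norm (bin_dev X f \<delta> h x0 n j \<omega>) \<le> (1/h + \<bar>?m\<bar>)^2"
        unfolding bin_dev_def by (simp add: abs_le_square_iff[symmetric])
    qed
  qed simp
  then have "(\<integral>\<^sup>+ \<omega>. ennreal (bin_dev X f \<delta> h x0 n j \<omega>) \<partial>M) = ennreal (\<integral>\<omega>. bin_dev X f \<delta> h x0 n j \<omega> \<partial>M)"
    by (intro nn_integral_eq_integral) (auto simp: bin_dev_nonneg)
  also have "\<dots> \<le> ennreal (bin_var_bound \<delta> h n (grid_cell x0 h j))"
    using bin_height_variance_le[OF n h d] by (intro ennreal_leI) (simp add: bin_dev_def)
  finally show ?thesis .
qed

text \<open>Summing the variance bounds over all bins: the masses add up to \<open>\<integral> f = 1\<close>,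
  \<open>\<integral> \<phi>\<close> and \<open>\<integral> k\<close>.\<close>

lemma sum_bin_var_bound:
  assumes n: "n \<ge> 1" and h: "h > 0" and d: "\<delta> > 0"
  shows "(\<integral>\<^sup>+ j. ennreal (h * bin_var_bound \<delta> h n (grid_cell x0 h j)) \<partial>count_space UNIV)
    = ennreal (1 / (real n * h) + 2 * (integral\<^sup>L lborel \<phi> * near_lag_sum \<gamma>0 u0 \<delta> n
        + integral\<^sup>L lborel k * far_lag_sum \<pi> u0 \<delta> n) / real n)"
proof -
  define a1 where "a1 = 1 / (real n * h)"
  define a2 where "a2 = 2 * near_lag_sum \<gamma>0 u0 \<delta> n / real n"
  define a3 where "a3 = 2 * far_lag_sum \<pi> u0 \<delta> n / real n"
  have a: "a1 \<ge> 0" "a2 \<ge> 0" "a3 \<ge> 0"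
    using h near_lag_sum_nonneg far_lag_sum_nonneg[OF \<pi>_nonneg]
    by (auto simp: a1_def a2_def a3_def)
  have split: "ennreal (h * bin_var_bound \<delta> h n B)
      = ennreal a1 * ennreal (mass f B) + ennreal a2 * ennreal (mass \<phi> B) + ennreal a3 * ennreal (mass k B)" for B
  proof -
    have "h * bin_var_bound \<delta> h n B = a1 * mass f B + a2 * mass \<phi> B + a3 * mass k B"
      unfolding bin_var_bound_def a1_def a2_def a3_def using h n by (simp add: field_simps power2_eq_square)
    then show ?thesis
      using a by (simp add: ennreal_mult[symmetric] ennreal_plus[symmetric] mass_nonneg del: ennreal_plus)
  qed
  have "(\<integral>\<^sup>+ j. ennreal (h * bin_var_bound \<delta> h n (grid_cell x0 h j)) \<partial>count_space UNIV)
      = ennreal a1 * ennreal (integral\<^sup>L lborel f) + ennreal a2 * ennreal (integral\<^sup>L lborel \<phi>)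
        + ennreal a3 * ennreal (integral\<^sup>L lborel k)"
    unfolding split
    by (simp add: nn_integral_add nn_integral_cmult sum_mass_grid[OF f_int f_nonneg h]
        sum_mass_grid[OF \<phi>_int \<phi>_nonneg h] sum_mass_grid[OF k_int k_nonneg h])
  also have "\<dots> = ennreal (a1 + a2 * integral\<^sup>L lborel \<phi> + a3 * integral\<^sup>L lborel k)"
    using a integral_\<phi>_nonneg integral_k_nonneg by (simp add: integral_f ennreal_mult[symmetric] ennreal_plus[symmetric] del: ennreal_plus)
  also have "a1 + a2 * integral\<^sup>L lborel \<phi> + a3 * integral\<^sup>L lborel k
      = 1 / (real n * h) + 2 * (integral\<^sup>L lborel \<phi> * near_lag_sum \<gamma>0 u0 \<delta> n
        + integral\<^sup>L lborel k * far_lag_sum \<pi> u0 \<delta> n) / real n"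
    by (simp add: a1_def a2_def a3_def add_divide_distrib algebra_simps)
  finally show ?thesis .
qed

text \<open>Expected stochastic part, summed over the cells between midpoints: each cell of
  length \<open>h\<close> carries the deviations of its two neighbouring bins, so every bin is counted
  twice.\<close>

lemma expected_cell_deviations_le:
  assumes n: "n \<ge> 1" and h: "h > 0" and d: "\<delta> > 0"
  shows "(\<integral>\<^sup>+ j. (\<integral>\<^sup>+ \<omega>. ennreal (2 * h * (bin_dev X f \<delta> h x0 n (j + 1) \<omega> + bin_dev X f \<delta> h x0 n j \<omega>)) \<partial>M)
          \<partial>count_space UNIV)
    \<le> ennreal (4 / (real n * h) + 8 * (integral\<^sup>L lborel \<phi> * near_lag_sum \<gamma>0 u0 \<delta> n
        + integral\<^sup>L lborel k * far_lag_sum \<pi> u0 \<delta> n) / real n)"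
proof -
  define V where "V j = ennreal (h * bin_var_bound \<delta> h n (grid_cell x0 h j))" for j
  define A where "A = 1 / (real n * h) + 2 * (integral\<^sup>L lborel \<phi> * near_lag_sum \<gamma>0 u0 \<delta> n
                    + integral\<^sup>L lborel k * far_lag_sum \<pi> u0 \<delta> n) / real n"
  have ED: "(\<integral>\<^sup>+ \<omega>. ennreal (2 * h * (bin_dev X f \<delta> h x0 n (j + 1) \<omega> + bin_dev X f \<delta> h x0 n j \<omega>)) \<partial>M)
      \<le> 2 * V (j + 1) + 2 * V j" for j
  proof -
    have "(\<integral>\<^sup>+ \<omega>. ennreal (2 * h * (bin_dev X f \<delta> h x0 n (j + 1) \<omega> + bin_dev X f \<delta> h x0 n j \<omega>)) \<partial>M)
        = 2 * ennreal h * ((\<integral>\<^sup>+ \<omega>. ennreal (bin_dev X f \<delta> h x0 n (j + 1) \<omega>) \<partial>M)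
          + (\<integral>\<^sup>+ \<omega>. ennreal (bin_dev X f \<delta> h x0 n j \<omega>) \<partial>M))"
      using h by (simp add: bin_dev_nonneg ennreal_mult ennreal_plus nn_integral_add nn_integral_cmult)
    also have "\<dots> \<le> 2 * ennreal h * (ennreal (bin_var_bound \<delta> h n (grid_cell x0 h (j + 1)))
        + ennreal (bin_var_bound \<delta> h n (grid_cell x0 h j)))"
      by (intro mult_left_mono add_mono expected_bin_dev_le n h d) auto
    also have "\<dots> = 2 * V (j + 1) + 2 * V j"
      unfolding V_def using h bin_var_bound_nonneg[OF h d]
      by (simp add: ennreal_mult distrib_left mult_ac)
    finally show ?thesis .
  qed
  have shift: "(\<integral>\<^sup>+ j. V (j + 1) \<partial>count_space UNIV) = (\<integral>\<^sup>+ j. V j \<partial>count_space UNIV)"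
    by (rule nn_integral_bij_count_space) (rule bij_betwI[where g="\<lambda>j. j - 1"]; simp)
  have sum_V: "(\<integral>\<^sup>+ j. V j \<partial>count_space UNIV) = ennreal A"
    unfolding V_def A_def by (rule sum_bin_var_bound[OF n h d])
  have A0: "A \<ge> 0"
    using h integral_\<phi>_nonneg integral_k_nonneg near_lag_sum_nonneg far_lag_sum_nonneg[OF \<pi>_nonneg]
    by (auto simp: A_def intro!: add_nonneg_nonneg divide_nonneg_nonneg mult_nonneg_nonneg)
  have "(\<integral>\<^sup>+ j. (\<integral>\<^sup>+ \<omega>. ennreal (2 * h * (bin_dev X f \<delta> h x0 n (j + 1) \<omega> + bin_dev X f \<delta> h x0 n j \<omega>)) \<partial>M)
        \<partial>count_space UNIV) \<le> (\<integral>\<^sup>+ j. 2 * V (j + 1) + 2 * V j \<partial>count_space UNIV)"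
    by (intro nn_integral_mono ED)
  also have "\<dots> = 2 * ennreal A + 2 * ennreal A"
    by (simp add: nn_integral_add nn_integral_cmult shift sum_V)
  also have "\<dots> = ennreal (4 * A)"
  proof -
    have "ennreal (4 * A) = ennreal (2 * A) + ennreal (2 * A)"
      using A0 by (simp add: ennreal_plus[symmetric] del: ennreal_plus)
    then show ?thesis by (simp add: ennreal_mult')
  qed
  also have "4 * A = 4 / (real n * h) + 8 * (integral\<^sup>L lborel \<phi> * near_lag_sum \<gamma>0 u0 \<delta> n
        + integral\<^sup>L lborel k * far_lag_sum \<pi> u0 \<delta> n) / real n"
    by (simp add: A_def field_simps)
  finally show ?thesis .
qed

end

context smooth_dependent_sampling
begin

text \<open>The cellwise error bound is integrated
  over \<open>\<omega>\<close>, exchanging the sum over cells with the expectation.\<close>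

theorem mise_bound:
  assumes n: "n \<ge> 1" and h: "h > 0" and d: "\<delta> > 0"
  shows "mise_fp M X f \<delta> h x0 n \<le> ennreal (4 / (real n * h)
     + 8 * (integral\<^sup>L lborel \<phi> * near_lag_sum \<gamma>0 u0 \<delta> n + integral\<^sup>L lborel k * far_lag_sum \<pi> u0 \<delta> n) / real n
     + 128 * h^4 * integral\<^sup>L lborel (\<lambda>x. (f2 x)^2))"
proof -
  define D where "D j \<omega> = ennreal (2 * h * (bin_dev X f \<delta> h x0 n (j + 1) \<omega> + bin_dev X f \<delta> h x0 n j \<omega>))" for j \<omega>
  define \<beta> where "\<beta> j = (\<integral>\<^sup>+ x. ennreal (2 * (fp_mean_polygon f h x0 x - f x)^2)
                          * indicator (grid_cell (x0 + h/2) h j) x \<partial>lborel)" for j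
  define S where "S = 4 / (real n * h) + 8 * (integral\<^sup>L lborel \<phi> * near_lag_sum \<gamma>0 u0 \<delta> n
                    + integral\<^sup>L lborel k * far_lag_sum \<pi> u0 \<delta> n) / real n"
  define B where "B = 128 * h^4 * integral\<^sup>L lborel (\<lambda>x. (f2 x)^2)"
  have [measurable]: "D j \<in> borel_measurable M" for j unfolding D_def by measurable
  have sum_\<beta>: "(\<integral>\<^sup>+ j. \<beta> j \<partial>count_space UNIV) \<le> ennreal B"
  proof -
    have "(\<integral>\<^sup>+ j. \<beta> j \<partial>count_space UNIV) = (\<integral>\<^sup>+ x. ennreal (2 * (fp_mean_polygon f h x0 x - f x)^2) \<partial>lborel)"
      unfolding \<beta>_def
      using nn_integral_grid_partition[OF h, of "\<lambda>j x. ennreal (2 * (fp_mean_polygon f h x0 x - f x)^2)" "x0 + h/2"]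
      by simp
    also have "\<dots> \<le> ennreal B" unfolding B_def by (rule integrated_sq_bias_le[OF h])
    finally show ?thesis .
  qed
  have "mise_fp M X f \<delta> h x0 n \<le> (\<integral>\<^sup>+ \<omega>. (\<integral>\<^sup>+ j. D j \<omega> + \<beta> j \<partial>count_space UNIV) \<partial>M)"
    unfolding mise_fp_def D_def \<beta>_def by (intro nn_integral_mono integrated_error_le_cells h f_meas)
  also have "\<dots> = (\<integral>\<^sup>+ j. (\<integral>\<^sup>+ \<omega>. D j \<omega> + \<beta> j \<partial>M) \<partial>count_space UNIV)"
    by (rule nn_integral_count_space_nn_integral) auto
  also have "\<dots> = (\<integral>\<^sup>+ j. (\<integral>\<^sup>+ \<omega>. D j \<omega> \<partial>M) \<partial>count_space UNIV) + (\<integral>\<^sup>+ j. \<beta> j \<partial>count_space UNIV)"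
    by (simp add: nn_integral_add emeasure_space_1)
  also have "\<dots> \<le> ennreal S + ennreal B"
    unfolding D_def S_def by (intro add_mono expected_cell_deviations_le n h d sum_\<beta>)
  also have "\<dots> = ennreal (S + B)"
    using h integral_\<phi>_nonneg integral_k_nonneg near_lag_sum_nonneg far_lag_sum_nonneg[OF \<pi>_nonneg]
    by (subst ennreal_plus) (auto simp: S_def B_def intro!: add_nonneg_nonneg divide_nonneg_nonneg mult_nonneg_nonneg)
  finally show ?thesis unfolding S_def B_def .
qed

end

section \<open>Rates for the bandwidth \<open>h = c n\<^sup>-\<^sup>1\<^sup>/\<^sup>5\<close>\<close>

lemma bandwidth_pow5:
  assumes "n \<ge> 1"
  shows "real n * (c * real n powr (-1/5))^5 = c^5"
proof -
  have "(real n powr (-1/5))^5 = real n powr (-1/5 * 5)"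
    using assms by (subst powr_realpow[symmetric]) (auto simp: powr_powr)
  also have "\<dots> = 1 / real n" using assms by (simp add: powr_minus_divide)
  finally show ?thesis using assms by (simp add: power_mult_distrib)
qed

context smooth_dependent_sampling
begin

text \<open>The MISE bound with the far lag sum absorbed into a constant and the near lag sum
  replaced by any bound \<open>s\<close> on \<open>\<delta> S\<^sub>n\<^sub>e\<^sub>a\<^sub>r\<close>.\<close>

lemma mise_bound_scaled:
  obtains C0 where "C0 \<ge> 0"
    and "\<And>x0 n h \<delta> s. n \<ge> 1 \<Longrightarrow> h > 0 \<Longrightarrow> 0 < \<delta> \<Longrightarrow> \<delta> \<le> 1 \<Longrightarrow> \<delta> * near_lag_sum \<gamma>0 u0 \<delta> n \<le> s \<Longrightarrow>
      mise_fp M X f \<delta> h x0 n \<le> ennreal (4 / (real n * h) + (8 * integral\<^sup>L lborel \<phi> * s + C0) / (real n * \<delta>)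
        + 128 * h^4 * integral\<^sup>L lborel (\<lambda>x. (f2 x)^2))"
proof -
  obtain C2 where C2: "\<And>\<delta> n. 0 < \<delta> \<Longrightarrow> \<delta> \<le> 1 \<Longrightarrow> far_lag_sum \<pi> u0 \<delta> n \<le> C2 / \<delta>"
    using far_lag_sum_le by blast
  show ?thesis
  proof (rule that[of "8 * integral\<^sup>L lborel k * \<bar>C2\<bar>"])
    show "8 * integral\<^sup>L lborel k * \<bar>C2\<bar> \<ge> 0" using integral_k_nonneg by simp
    fix x0 h \<delta> s :: real and n :: nat
    assume n: "n \<ge> 1" and h: "h > 0" and d: "0 < \<delta>" "\<delta> \<le> 1" and s: "\<delta> * near_lag_sum \<gamma>0 u0 \<delta> n \<le> s"
    have near: "integral\<^sup>L lborel \<phi> * near_lag_sum \<gamma>0 u0 \<delta> n \<le> integral\<^sup>L lborel \<phi> * s / \<delta>"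
    proof -
      have "integral\<^sup>L lborel \<phi> * (\<delta> * near_lag_sum \<gamma>0 u0 \<delta> n) \<le> integral\<^sup>L lborel \<phi> * s"
        using s integral_\<phi>_nonneg by (rule mult_left_mono)
      then show ?thesis using d by (simp add: pos_le_divide_eq mult_ac)
    qed
    have "far_lag_sum \<pi> u0 \<delta> n \<le> \<bar>C2\<bar> / \<delta>"
      using C2[OF d] d by (smt (verit) divide_right_mono)
    then have far: "integral\<^sup>L lborel k * far_lag_sum \<pi> u0 \<delta> n \<le> integral\<^sup>L lborel k * \<bar>C2\<bar> / \<delta>"
      using integral_k_nonneg by (metis mult_left_mono times_divide_eq_right)
    have "8 * (integral\<^sup>L lborel \<phi> * near_lag_sum \<gamma>0 u0 \<delta> n + integral\<^sup>L lborel k * far_lag_sum \<pi> u0 \<delta> n) / real n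
        \<le> 8 * (integral\<^sup>L lborel \<phi> * s / \<delta> + integral\<^sup>L lborel k * \<bar>C2\<bar> / \<delta>) / real n"
      using near far by (intro divide_right_mono mult_left_mono add_mono) auto
    also have "\<dots> = (8 * integral\<^sup>L lborel \<phi> * s + 8 * integral\<^sup>L lborel k * \<bar>C2\<bar>) / (real n * \<delta>)"
      using d by (simp add: field_simps)
    finally have stoch: "8 * (integral\<^sup>L lborel \<phi> * near_lag_sum \<gamma>0 u0 \<delta> n + integral\<^sup>L lborel k * far_lag_sum \<pi> u0 \<delta> n) / real n
        \<le> (8 * integral\<^sup>L lborel \<phi> * s + 8 * integral\<^sup>L lborel k * \<bar>C2\<bar>) / (real n * \<delta>)" .
    show "mise_fp M X f \<delta> h x0 n \<le> ennreal (4 / (real n * h) + (8 * integral\<^sup>L lborel \<phi> * s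
        + 8 * integral\<^sup>L lborel k * \<bar>C2\<bar>) / (real n * \<delta>) + 128 * h^4 * integral\<^sup>L lborel (\<lambda>x. (f2 x)^2))"
      by (rule order_trans[OF mise_bound[OF n h d(1)]]) (intro ennreal_leI add_mono order.refl stoch)
  qed
qed

text \<open>Case \<open>\<gamma>0 < 1\<close>, \<open>\<delta> = d1 h\<close>: every term of the bound is a constant times
  \<open>1/(n \<delta>)\<close>, because \<open>n h\<^sup>5 = c\<^sup>5\<close>.\<close>

lemma mise_rate_lt1:
  assumes g1: "\<gamma>0 < 1" and c: "c > 0" and d1: "d1 > 0"
  shows "\<exists>C. \<forall>\<^sub>F n in sequentially.
    mise_fp M X f (d1 * (c * real n powr (-1/5))) (c * real n powr (-1/5)) x0 n
      \<le> ennreal (C / (real n * (d1 * (c * real n powr (-1/5)))))"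
proof -
  obtain C0 where "C0 \<ge> 0" and bound: "\<And>x0 n h \<delta> s. n \<ge> 1 \<Longrightarrow> h > 0 \<Longrightarrow> 0 < \<delta> \<Longrightarrow> \<delta> \<le> 1 \<Longrightarrow>
      \<delta> * near_lag_sum \<gamma>0 u0 \<delta> n \<le> s \<Longrightarrow>
      mise_fp M X f \<delta> h x0 n \<le> ennreal (4 / (real n * h) + (8 * integral\<^sup>L lborel \<phi> * s + C0) / (real n * \<delta>)
        + 128 * h^4 * integral\<^sup>L lborel (\<lambda>x. (f2 x)^2))"
    using mise_bound_scaled by blast
  define s where "s = u0 powr (1 - \<gamma>0) / (1 - \<gamma>0)"
  define Q where "Q = integral\<^sup>L lborel (\<lambda>x. (f2 x)^2)"
  define C where "C = 4 * d1 + (8 * integral\<^sup>L lborel \<phi> * s + C0) + 128 * Q * c^5 * d1"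
  have ev: "\<forall>\<^sub>F n in sequentially. n \<ge> 1 \<and> d1 * (c * real n powr (-1/5)) \<le> 1"
    by (intro eventually_conj eventually_ge_at_top) (use c d1 in real_asymp)
  show ?thesis
  proof (intro exI[of _ C] eventually_mono[OF ev], elim conjE)
    fix n :: nat assume n: "n \<ge> 1" and small: "d1 * (c * real n powr (-1/5)) \<le> 1"
    define h where "h = c * real n powr (-1/5)"
    define \<delta> where "\<delta> = d1 * h"
    have h: "h > 0" and d: "0 < \<delta>" "\<delta> \<le> 1" using n c d1 small by (auto simp: h_def \<delta>_def)
    have near: "\<delta> * near_lag_sum \<gamma>0 u0 \<delta> n \<le> s"
      using near_lag_sum_lt1[OF d(1) \<gamma>0_pos g1 u0_pos, of n] d g1 by (simp add: s_def field_simps)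
    have t1: "4 / (real n * h) = 4 * d1 / (real n * \<delta>)"
      unfolding \<delta>_def using h d1 n by (simp add: field_simps)
    have t3: "128 * h^4 * Q = 128 * Q * c^5 * d1 / (real n * \<delta>)"
    proof -
      have "real n * \<delta> * h^4 = d1 * (real n * h^5)" by (simp add: \<delta>_def eval_nat_numeral algebra_simps)
      also have "real n * h^5 = c^5" unfolding h_def by (rule bandwidth_pow5[OF n])
      finally have "h^4 = d1 * c^5 / (real n * \<delta>)" using n d by (simp add: eq_divide_eq mult.commute)
      then show ?thesis by simp
    qed
    have "4 / (real n * h) + (8 * integral\<^sup>L lborel \<phi> * s + C0) / (real n * \<delta>) + 128 * h^4 * Q
        = C / (real n * \<delta>)"
      unfolding t1 t3 C_def by (simp add: add_divide_distrib)
    then have "mise_fp M X f \<delta> h x0 n \<le> ennreal (C / (real n * \<delta>))"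
      using bound[OF n h d near] unfolding Q_def by simp
    then show "mise_fp M X f (d1 * (c * real n powr (-1/5))) (c * real n powr (-1/5)) x0 n
        \<le> ennreal (C / (real n * (d1 * (c * real n powr (-1/5)))))"
      unfolding h_def \<delta>_def .
  qed
qed

end

lemma log_design_eventually:
  fixes c d2 u0 :: real
  assumes c: "c > 0" and d2: "d2 > 0" and u0: "u0 > 0"
  defines "hn \<equiv> \<lambda>n::nat. c * real n powr (-1/5)"
  defines "\<delta>n \<equiv> \<lambda>n. d2 * hn n * ln (1 / hn n)"
  shows "\<forall>\<^sub>F n in sequentially. n \<ge> 1 \<and> 0 < hn n \<and> 0 < \<delta>n n \<and> \<delta>n n \<le> 1 \<and> \<delta>n n \<le> u0
    \<and> 1 \<le> ln (real n * \<delta>n n) \<and> ln (1 / hn n) \<le> ln (real n * \<delta>n n) \<and> ln (1 / \<delta>n n) \<le> ln (real n * \<delta>n n)"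
proof -
  have "\<forall>\<^sub>F n in sequentially. n \<ge> 1 \<and> hn n < 1 \<and> \<delta>n n \<le> 1 \<and> \<delta>n n \<le> u0
    \<and> exp 1 \<le> real n * \<delta>n n \<and> 1 / hn n \<le> real n * \<delta>n n \<and> 1 / \<delta>n n \<le> real n * \<delta>n n"
    unfolding hn_def \<delta>n_def
    apply (intro eventually_conj eventually_ge_at_top)
    subgoal using c by real_asymp
    subgoal using c d2 by real_asymp
    subgoal using c d2 u0 by real_asymp
    subgoal using c d2 by real_asymp
    subgoal using c d2 by real_asymp
    subgoal using c d2 by real_asymp
    done
  then show ?thesis
  proof (rule eventually_mono, elim conjE, intro conjI)
    fix n :: nat
    assume n: "n \<ge> 1" and h1: "hn n < 1" and "\<delta>n n \<le> 1" "\<delta>n n \<le> u0"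
      and T: "exp 1 \<le> real n * \<delta>n n" "1 / hn n \<le> real n * \<delta>n n" "1 / \<delta>n n \<le> real n * \<delta>n n"
    show h: "0 < hn n" using n c by (simp add: hn_def)
    show d: "0 < \<delta>n n" using h h1 d2 by (simp add: \<delta>n_def)
    show "n \<ge> 1" "\<delta>n n \<le> 1" "\<delta>n n \<le> u0" by fact+
    show "1 \<le> ln (real n * \<delta>n n)" using ln_mono[OF T(1) exp_gt_zero] by simp
    show "ln (1 / hn n) \<le> ln (real n * \<delta>n n)" "ln (1 / \<delta>n n) \<le> ln (real n * \<delta>n n)"
      using T(2,3) h d by (intro ln_mono; simp)+
  qed
qed

context smooth_dependent_sampling
begin

text \<open>Case \<open>\<gamma>0 = 1\<close>, \<open>\<delta> = d2 h ln(1/h)\<close>: the near lag sum now carries a factor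
  \<open>ln(1/\<delta>)\<close>, and every term of the bound is a constant times \<open>ln T / T\<close>.\<close>

lemma mise_rate_eq1:
  assumes g1: "\<gamma>0 = 1" and c: "c > 0" and d2: "d2 > 0"
  shows "\<exists>C. \<forall>\<^sub>F n in sequentially.
    (let h = c * real n powr (-1/5); \<delta> = d2 * h * ln (1 / h); T = real n * \<delta>
     in mise_fp M X f \<delta> h x0 n \<le> ennreal (C * ln T / T))"
proof -
  obtain C0 where C0: "C0 \<ge> 0" and bound: "\<And>x0 n h \<delta> s. n \<ge> 1 \<Longrightarrow> h > 0 \<Longrightarrow> 0 < \<delta> \<Longrightarrow> \<delta> \<le> 1 \<Longrightarrow>
      \<delta> * near_lag_sum \<gamma>0 u0 \<delta> n \<le> s \<Longrightarrow>
      mise_fp M X f \<delta> h x0 n \<le> ennreal (4 / (real n * h) + (8 * integral\<^sup>L lborel \<phi> * s + C0) / (real n * \<delta>)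
        + 128 * h^4 * integral\<^sup>L lborel (\<lambda>x. (f2 x)^2))"
    using mise_bound_scaled by blast
  define hn where "hn n = c * real n powr (-1/5)" for n :: nat
  define \<delta>n where "\<delta>n n = d2 * hn n * ln (1 / hn n)" for n
  define a where "a = \<bar>1 + ln u0\<bar> + 1"
  define Q where "Q = integral\<^sup>L lborel (\<lambda>x. (f2 x)^2)"
  define C where "C = 4 * d2 + (8 * integral\<^sup>L lborel \<phi> * a + C0) + 128 * Q * c^5 * d2"
  have I\<phi>: "integral\<^sup>L lborel \<phi> \<ge> 0" and Q0: "Q \<ge> 0"
    using integral_\<phi>_nonneg by (auto simp: Q_def)
  have ev: "\<forall>\<^sub>F n in sequentially. n \<ge> 1 \<and> 0 < hn n \<and> 0 < \<delta>n n \<and> \<delta>n n \<le> 1 \<and> \<delta>n n \<le> u0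
    \<and> 1 \<le> ln (real n * \<delta>n n) \<and> ln (1 / hn n) \<le> ln (real n * \<delta>n n) \<and> ln (1 / \<delta>n n) \<le> ln (real n * \<delta>n n)"
    using log_design_eventually[OF c d2 u0_pos] unfolding hn_def \<delta>n_def .
  show ?thesis
  proof (intro exI[of _ C] eventually_mono[OF ev], elim conjE)
    fix n :: nat
    define h where "h = hn n"
    define \<delta> where "\<delta> = \<delta>n n"
    define T where "T = real n * \<delta>"
    define L where "L = ln T"
    assume n: "n \<ge> 1" and "0 < hn n" "0 < \<delta>n n" "\<delta>n n \<le> 1" "\<delta>n n \<le> u0"
      and "1 \<le> ln (real n * \<delta>n n)" "ln (1 / hn n) \<le> ln (real n * \<delta>n n)" "ln (1 / \<delta>n n) \<le> ln (real n * \<delta>n n)"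
    then have h: "h > 0" and d: "0 < \<delta>" "\<delta> \<le> 1" "\<delta> \<le> u0" and L: "1 \<le> L" "ln (1 / h) \<le> L" "ln (1 / \<delta>) \<le> L"
      by (simp_all add: h_def \<delta>_def T_def L_def)
    have h_eq: "h = c * real n powr (-1/5)" and \<delta>_eq: "\<delta> = d2 * h * ln (1 / h)"
      by (simp_all add: h_def \<delta>_def hn_def \<delta>n_def)
    have lh: "ln (1 / h) > 0" using d(1) mult_pos_pos[OF d2 h] by (simp add: \<delta>_eq zero_less_mult_iff)
    have T0: "T > 0" using n d by (simp add: T_def)
    have near: "\<delta> * near_lag_sum \<gamma>0 u0 \<delta> n \<le> 1 + ln (u0 / \<delta>)"
      using near_lag_sum_eq1[OF d(1) d(3), of n] d by (simp add: g1 field_simps)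
    have s: "8 * integral\<^sup>L lborel \<phi> * (1 + ln (u0 / \<delta>)) + C0 \<le> (8 * integral\<^sup>L lborel \<phi> * a + C0) * L"
    proof -
      have "1 + ln (u0 / \<delta>) = (1 + ln u0) + ln (1 / \<delta>)" using d u0_pos by (simp add: ln_div)
      also have "\<dots> \<le> a * L"
      proof -
        have "1 + ln u0 \<le> \<bar>1 + ln u0\<bar> * L"
          using L(1) by (smt (verit) mult_le_cancel_left1 abs_ge_self abs_ge_zero)
        then show ?thesis using L(3) unfolding a_def distrib_right by linarith
      qed
      finally have "8 * integral\<^sup>L lborel \<phi> * (1 + ln (u0 / \<delta>)) \<le> 8 * integral\<^sup>L lborel \<phi> * (a * L)"
        using I\<phi> by (intro mult_left_mono) auto
      moreover have "C0 \<le> C0 * L" using C0 L(1) by (simp add: mult_le_cancel_left1)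
      ultimately show ?thesis by (simp add: algebra_simps)
    qed
    have t1: "4 / (real n * h) \<le> 4 * d2 * L / T"
    proof -
      have "4 / (real n * h) = 4 * d2 * ln (1 / h) / T"
        unfolding T_def \<delta>_eq using h lh d2 n by (simp add: field_simps)
      also have "\<dots> \<le> 4 * d2 * L / T" using L(2) d2 T0 by (intro divide_right_mono mult_left_mono) auto
      finally show ?thesis .
    qed
    have t2: "(8 * integral\<^sup>L lborel \<phi> * (1 + ln (u0 / \<delta>)) + C0) / (real n * \<delta>) \<le> (8 * integral\<^sup>L lborel \<phi> * a + C0) * L / T"
      unfolding T_def[symmetric] using divide_right_mono[OF s, of T] T0 by simp
    have t3: "128 * h^4 * Q \<le> 128 * Q * c^5 * d2 * L / T"
    proof -
      have "T * h^4 = d2 * ln (1 / h) * (real n * h^5)" by (simp add: T_def \<delta>_eq eval_nat_numeral)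
      also have "real n * h^5 = c^5" unfolding h_eq by (rule bandwidth_pow5[OF n])
      finally have "T * h^4 \<le> d2 * c^5 * L" using L(2) d2 c by (simp add: mult_left_mono)
      then have "h^4 \<le> d2 * c^5 * L / T" using T0 by (simp add: field_simps)
      then have "128 * h^4 * Q \<le> 128 * (d2 * c^5 * L / T) * Q" using Q0 by (intro mult_right_mono) auto
      then show ?thesis by (simp add: algebra_simps)
    qed
    have "4 / (real n * h) + (8 * integral\<^sup>L lborel \<phi> * (1 + ln (u0 / \<delta>)) + C0) / (real n * \<delta>) + 128 * h^4 * Q
        \<le> 4 * d2 * L / T + (8 * integral\<^sup>L lborel \<phi> * a + C0) * L / T + 128 * Q * c^5 * d2 * L / T"
      using t1 t2 t3 by linarith
    also have "\<dots> = C * L / T" by (simp add: C_def add_divide_distrib algebra_simps)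
    finally have "mise_fp M X f \<delta> h x0 n \<le> ennreal (C * L / T)"
      using bound[OF n h d(1) d(2) near] unfolding Q_def by (meson ennreal_leI order_trans)
    then show "let h = c * real n powr (-1/5); \<delta> = d2 * h * ln (1 / h); T = real n * \<delta>
        in mise_fp M X f \<delta> h x0 n \<le> ennreal (C * ln T / T)"
      unfolding Let_def L_def T_def \<delta>_eq h_eq .
  qed
qed

end

theorem corollary2:
  fixes M :: "'w measure"
    and X :: "real \<Rightarrow> 'w \<Rightarrow> real"
    and f f1 f2 :: "real \<Rightarrow> real"
    and fu :: "real \<Rightarrow> real \<Rightarrow> real \<Rightarrow> real"
    and l0 \<nu> \<gamma>0 u0 u1 :: real
    and \<phi> k \<pi> :: "real \<Rightarrow> real"
    and c x0 :: real
  assumes prob: "prob_space M"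
    and meas: "(\<lambda>(t, \<omega>). X t \<omega>) \<in> borel_measurable (borel \<Otimes>\<^sub>M M)"
    and f_nonneg: "\<And>x. f x \<ge> 0"
    and dens: "\<And>t. distributed M lborel (X t) (\<lambda>x. ennreal (f x))"
    and fu_nonneg: "\<And>u y z. u > 0 \<Longrightarrow> fu u y z \<ge> 0"
    and joint: "\<And>s t. s \<noteq> t \<Longrightarrow>
        distributed M (lborel \<Otimes>\<^sub>M lborel) (\<lambda>\<omega>. (X s \<omega>, X t \<omega>))
          (\<lambda>(y, z). ennreal (fu \<bar>t - s\<bar> y z))"
    \<comment> \<open>A0'(i): f in C^2, f'' in L1, f and f'' in L2\<close>
    and d1f: "\<And>x. (f has_real_derivative f1 x) (at x)"
    and d2f: "\<And>x. (f1 has_real_derivative f2 x) (at x)"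
    and f2_cont: "continuous_on UNIV f2"
    and f2_L1: "integrable lborel f2"
    and f_L2: "integrable lborel (\<lambda>x. (f x)\<^sup>2)"
    and f2_L2: "integrable lborel (\<lambda>x. (f2 x)\<^sup>2)"
    \<comment> \<open>A0'(ii): Hoelder condition on f''\<close>
    and l0_pos: "l0 > 0" and nu: "0 < \<nu>" "\<nu> \<le> 1"
    and hoelder: "\<And>x y. \<bar>f2 x - f2 y\<bar> \<le> l0 * \<bar>x - y\<bar> powr \<nu>"
    \<comment> \<open>A0'(iii)\<close>
    and f_cont: "continuous_on UNIV f"
    and f_bdd: "bounded (range f)"
    \<comment> \<open>A1'(i)\<close>
    and \<gamma>0_pos: "\<gamma>0 > 0" and u0_pos: "u0 > 0"
    and \<phi>_pos: "\<And>y. \<phi> y > 0" and \<phi>_cont: "continuous_on UNIV \<phi>"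
    and \<phi>_int: "integrable lborel \<phi>"
    and A1i: "\<And>u y z. 0 < u \<Longrightarrow> u \<le> u0 \<Longrightarrow> fu u y z \<le> \<phi> y * u powr (- \<gamma>0)"
    \<comment> \<open>A1'(ii)\<close>
    and k_pos: "\<And>y. k y > 0" and k_cont: "continuous_on UNIV k"
    and k_int: "integrable lborel k"
    and \<pi>_bdd: "bounded (\<pi> ` {u0..})"
    and \<pi>_ult_dec: "\<exists>a. \<forall>u v. a \<le> u \<longrightarrow> u \<le> v \<longrightarrow> \<pi> v \<le> \<pi> u"
    and u1: "u1 > u0" and \<pi>_int: "set_integrable lborel {u1..} \<pi>"
    and A1ii: "\<And>u y z. u \<ge> u0 \<Longrightarrow> \<bar>fu u y z - f y * f z\<bar> \<le> k y * \<pi> u"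
    \<comment> \<open>bandwidth h_n = c n^(-1/5)\<close>
    and c_pos: "0 < c"
  shows "(\<gamma>0 < 1 \<longrightarrow>
           (\<forall>d1>0. \<exists>C. \<forall>\<^sub>F n in sequentially.
              mise_fp M X f (d1 * (c * real n powr (-1/5))) (c * real n powr (-1/5)) x0 n
                \<le> ennreal (C / (real n * (d1 * (c * real n powr (-1/5)))))))
       \<and> (\<gamma>0 = 1 \<longrightarrow>
           (\<forall>d2>0. \<exists>C. \<forall>\<^sub>F n in sequentially.
              (let h = c * real n powr (-1/5); \<delta> = d2 * h * ln (1 / h); T = real n * \<delta>
               in mise_fp M X f \<delta> h x0 n \<le> ennreal (C * ln T / T))))"
proof -
  interpret smooth_dependent_sampling M X f fu \<phi> k \<pi> \<gamma>0 u0 u1 f1 f2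
  proof -
    interpret prob_space M by (rule prob)
    show "smooth_dependent_sampling M X f fu \<phi> k \<pi> \<gamma>0 u0 u1 f1 f2"
      by unfold_locales
        (use f_nonneg dens joint \<gamma>0_pos u0_pos \<phi>_pos \<phi>_int A1i k_pos k_int \<pi>_bdd \<pi>_ult_dec u1 \<pi>_int A1ii
          d1f d2f f2_cont f2_L2 in \<open>auto intro: less_imp_le\<close>)
  qed
  show ?thesis
    using mise_rate_lt1[OF _ c_pos] mise_rate_eq1[OF _ c_pos] by blast
qed

end
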